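(* Let $0<\underline{b}<\overline{b}<\infty$, $0<\underline{\alpha}<\overline{\alpha}<\infty$, $\overline{\theta}>0$. Let $\alpha_0\in[\underline{\alpha},\overline{\alpha}]$, $\theta_0$ supported in $[\underline{b},\overline{b}]$ with $\|\theta_0\|_\infty<\overline{\theta}$, and $v_0=v_{\alpha_0,\theta_0}$. Then there is a constant $C$, independent of $v$, such that for every $v=v_{\alpha,\theta}$ in the support of the prior, \[ d_{\mathcal H}(\mathbb{Q}_{v_0},\mathbb{Q}_v)\le C\big(|\alpha-\alpha_0|+\|\theta-\theta_0\|_\infty\big). \]
   Context: $v_{\alpha,\theta}(x)=x^{-1}e^{-\alpha x-\theta(x)}$, $x>0$. $\mathbb{Q}_v$ is the law of $X_1$ for the Lévy process with triplet $(\gamma,0,\nu)$, $\nu(\mathrm{d}x)=v(x)\mathrm{d}x$ on $(0,\infty)$, $\gamma=\int_0^1x\,\nu(\mathrm{d}x)$. The prior support consists of $v_{\alpha,\theta}$ with $\alpha\in[\underline{\alpha},\overline{\alpha}]$ and, for a grid $\underline{b}=b_1<\dots<b_N=\overline{b}$, $\theta(x)=\rho_k+\theta_kx$ on $(b_k,b_{k+1}]$, $\theta=0$ outside $(\underline{b},\overline{b}]$, $\rho_k,\theta_k\in[-\overline{\theta},\overline{\theta}]$. $d^2_{\mathcal H}(P,Q)=\frac12\int(\sqrt{\mathrm{d}P}-\sqrt{\mathrm{d}Q})^2$. *)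

theory Defs
  imports "HOL-Probability.Probability"
begin

definition levy_dens :: "real \<Rightarrow> (real \<Rightarrow> real) \<Rightarrow> real \<Rightarrow> real" where
  "levy_dens a th x = (if 0 < x then exp (- a * x - th x) / x else 0)"

definition levy_drift :: "(real \<Rightarrow> real) \<Rightarrow> real" where
  "levy_drift v = set_lebesgue_integral lborel {0<..1} (\<lambda>x. x * v x)"

definition levy_exponent :: "(real \<Rightarrow> real) \<Rightarrow> real \<Rightarrow> complex" where
  "levy_exponent v u =
     \<i> * complex_of_real (levy_drift v * u)
     + set_lebesgue_integral lborel {0<..}
         (\<lambda>x. (iexp (u * x) - 1 - \<i> * complex_of_real (u * x) * indicator {..1} x)
              * complex_of_real (v x))"

text \<open>P is the law of X_1 of the Levy process with triplet (gamma,0,nu), gamma = int_0^1 x nu(dx).\<close>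
definition is_levy_law :: "(real \<Rightarrow> real) \<Rightarrow> real measure \<Rightarrow> bool" where
  "is_levy_law v P \<longleftrightarrow> prob_space P \<and> sets P = sets borel \<and>
     (\<forall>u. char P u = exp (levy_exponent v u))"

definition sum_measure :: "'a measure \<Rightarrow> 'a measure \<Rightarrow> 'a measure" where
  "sum_measure P Q = measure_of (space P) (sets P) (\<lambda>A. emeasure P A + emeasure Q A)"

definition hellinger :: "'a measure \<Rightarrow> 'a measure \<Rightarrow> real" where
  "hellinger P Q = (let \<mu> = sum_measure P Q in
     sqrt ((1/2) * (\<integral>x. (sqrt (enn2real (RN_deriv \<mu> P x)) - sqrt (enn2real (RN_deriv \<mu> Q x)))\<^sup>2 \<partial>\<mu>)))"

definition grid_theta :: "(nat \<Rightarrow> real) \<Rightarrow> nat \<Rightarrow> (nat \<Rightarrow> real) \<Rightarrow> (nat \<Rightarrow> real) \<Rightarrow> real \<Rightarrow> real" where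
  "grid_theta b N \<rho> t x = (\<Sum>k\<in>{1..<N}. indicator {b k<..b (Suc k)} x * (\<rho> k + t k * x))"

end

theory Submission
  imports Defs
begin

(* Choose a rate A so large that every Levy density v of the prior class exceeds e^(-Ax)/x, the
   Levy density of the exponential law Exp(A) (Frullani's integral), by an integrable remainder
   r = v - e^(-Ax)/x.  Then Q_v = Exp(A) * CPoisson(r) has the explicit density
   e^(-m) Sum_n (Exp(A) * r^{*n}) / n! with m = Int r, and Cauchy-Schwarz applied term by term
   bounds the Hellinger affinity of two such laws from below by exp(-1/2 Int (sqrt r0 - sqrt r)^2),
   whence d_H^2 <= 1/2 Int (sqrt r0 - sqrt r)^2.  Since r0 + r >= (1 - e^(-x)) (v0 + v) and
   |e^(-p) - e^(-q)| <= (e^(-p) + e^(-q)) |p - q|, the integrand is at most a constant times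
   e^(-alpha x / 2) (|alpha - alpha0| + |theta - theta0|_oo)^2. *)

section \<open>Hellinger distance of absolutely continuous laws\<close>

lemma integrable_sqrt_mult:
  fixes p q :: "'a \<Rightarrow> real"
  assumes "integrable M p" "integrable M q" "\<And>x. 0 \<le> p x" "\<And>x. 0 \<le> q x"
  shows "integrable M (\<lambda>x. sqrt (p x * q x))"
proof (rule Bochner_Integration.integrable_bound[of _ "\<lambda>x. p x + q x"])
  show "AE x in M. norm (sqrt (p x * q x)) \<le> norm (p x + q x)"
  proof (rule AE_I2)
    fix x
    have "sqrt (p x * q x) \<le> (p x + q x) / 2"
      using assms(3,4) by (rule arith_geo_mean_sqrt)
    then show "norm (sqrt (p x * q x)) \<le> norm (p x + q x)"
      using assms(3,4)[of x] by simp
  qed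
qed (use assms in \<open>auto intro: borel_measurable_integrable\<close>)

lemma sum_measure_density:
  fixes p q :: "'a \<Rightarrow> real"
  assumes [measurable]: "p \<in> borel_measurable M" "q \<in> borel_measurable M"
    and "\<And>x. 0 \<le> p x" "\<And>x. 0 \<le> q x"
  shows "sum_measure (density M p) (density M q) = density M (\<lambda>x. p x + q x)"
proof -
  have "sum_measure (density M p) (density M q) =
     measure_of (space M) (sets M) (\<lambda>A. emeasure (density M p) A + emeasure (density M q) A)"
    unfolding sum_measure_def by simp
  also have "\<dots> = measure_of (space M) (sets M) (emeasure (density M (\<lambda>x. p x + q x)))"
  proof (rule measure_of_eq)
    fix A assume "A \<in> sigma_sets (space M) (sets M)"
    then have A: "A \<in> sets M"
      by (metis sets.sigma_sets_eq)
    have "(\<integral>\<^sup>+x\<in>A. ennreal (p x + q x) \<partial>M) = (\<integral>\<^sup>+x. ennreal (p x) * indicator A x + ennreal (q x) * indicator A x \<partial>M)"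
      using assms(3,4) by (intro nn_integral_cong) (auto simp: indicator_def)
    then show "emeasure (density M p) A + emeasure (density M q) A = emeasure (density M (\<lambda>x. p x + q x)) A"
      using A by (simp add: emeasure_density nn_integral_add)
  qed (rule sets.space_closed)
  also have "\<dots> = density M (\<lambda>x. p x + q x)"
    using measure_of_of_measure[of "density M (\<lambda>x. p x + q x)"] by simp
  finally show ?thesis .
qed

definition density_ratio :: "('a \<Rightarrow> real) \<Rightarrow> ('a \<Rightarrow> real) \<Rightarrow> 'a \<Rightarrow> real" where
  "density_ratio p q x = (if p x + q x = 0 then 0 else p x / (p x + q x))"

lemma AE_RN_deriv_density_add:
  fixes p q :: "'a \<Rightarrow> real"
  assumes [measurable]: "p \<in> borel_measurable M" "q \<in> borel_measurable M"
    and p0: "\<And>x. 0 \<le> p x" and q0: "\<And>x. 0 \<le> q x"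
    and "integrable M p" "integrable M q"
  shows "AE x in density M (\<lambda>x. p x + q x).
    RN_deriv (density M (\<lambda>x. p x + q x)) (density M p) x = ennreal (density_ratio p q x)"
proof -
  define \<mu> where "\<mu> = density M (\<lambda>x. p x + q x)"
  have "emeasure \<mu> (space \<mu>) = (\<integral>\<^sup>+x. p x \<partial>M) + (\<integral>\<^sup>+x. q x \<partial>M)"
    unfolding \<mu>_def using p0 q0 by (simp add: emeasure_density nn_integral_add)
  then interpret \<mu>: finite_measure \<mu>
    using assms by (intro finite_measureI) (simp add: nn_integral_eq_integral)
  have [measurable]: "density_ratio p q \<in> borel_measurable M"
    unfolding density_ratio_def by measurable
  have sets_\<mu>: "sets \<mu> = sets M"
    unfolding \<mu>_def by simp
  have "AE x in \<mu>. ennreal (density_ratio p q x) = RN_deriv \<mu> (density M p) x"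
  proof (rule \<mu>.RN_deriv_unique)
    have "density M (\<lambda>x. ennreal (p x + q x) * ennreal (density_ratio p q x)) = density M p"
      using p0 q0 by (intro density_cong) (auto simp: density_ratio_def ennreal_mult[symmetric]
          simp del: ennreal_plus dest: add_nonneg_eq_0_iff[THEN iffD1, rotated 2])
    then show "density \<mu> (\<lambda>x. ennreal (density_ratio p q x)) = density M p"
      unfolding \<mu>_def by (subst density_density_eq) simp_all
  qed (simp add: measurable_cong_sets[OF sets_\<mu> refl])
  then show ?thesis
    unfolding \<mu>_def by (auto elim: eventually_mono)
qed

lemma density_ratio_nonneg: "0 \<le> p x \<Longrightarrow> 0 \<le> q x \<Longrightarrow> 0 \<le> density_ratio p q x"
  by (simp add: density_ratio_def)

lemma add_mult_sqrt_density_ratio_diff_sq: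
  fixes p q :: "'a \<Rightarrow> real"
  assumes "0 \<le> p x" "0 \<le> q x"
  shows "(p x + q x) * (sqrt (density_ratio p q x) - sqrt (density_ratio q p x))\<^sup>2
    = p x + q x - 2 * sqrt (p x * q x)"
proof (cases "p x + q x = 0")
  case True
  then show ?thesis using assms by (simp add: density_ratio_def)
next
  case False
  then have s: "p x + q x > 0" using assms by simp
  have "(sqrt (density_ratio p q x) - sqrt (density_ratio q p x))\<^sup>2
      = density_ratio p q x + density_ratio q p x - 2 * sqrt (density_ratio p q x * density_ratio q p x)"
    using assms by (simp add: power2_eq_square algebra_simps real_sqrt_mult density_ratio_nonneg)
  also have "density_ratio p q x + density_ratio q p x = 1"
    using False by (simp add: density_ratio_def add_divide_distrib[symmetric] add.commute)
  also have "density_ratio p q x * density_ratio q p x = (p x * q x) / (p x + q x)\<^sup>2"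
    using False by (simp add: density_ratio_def power2_eq_square add.commute)
  also have "sqrt ((p x * q x) / (p x + q x)\<^sup>2) = sqrt (p x * q x) / (p x + q x)"
    using s by (simp add: real_sqrt_divide)
  finally show ?thesis using s by (simp add: field_simps)
qed

lemma hellinger_density_sq:
  fixes p q :: "'a \<Rightarrow> real"
  assumes [measurable]: "p \<in> borel_measurable M" "q \<in> borel_measurable M"
    and p0: "\<And>x. 0 \<le> p x" and q0: "\<And>x. 0 \<le> q x"
    and ip: "(\<integral>\<^sup>+x. p x \<partial>M) = 1" and iq: "(\<integral>\<^sup>+x. q x \<partial>M) = 1"
  shows "(hellinger (density M p) (density M q))\<^sup>2 = 1 - (\<integral>x. sqrt (p x * q x) \<partial>M)"
proof -
  define \<mu> where "\<mu> = density M (\<lambda>x. p x + q x)"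
  have intp: "integrable M p" and intq: "integrable M q"
    using ip iq p0 q0 by (auto intro!: integrableI_nn_integral_finite)
  have "(\<integral>x. p x \<partial>M) = 1" and "(\<integral>x. q x \<partial>M) = 1"
    using ip iq p0 q0 by (subst integral_eq_nn_integral; simp)+
  then have integral_sum: "(\<integral>x. p x + q x - 2 * sqrt (p x * q x) \<partial>M) = 2 - 2 * (\<integral>x. sqrt (p x * q x) \<partial>M)"
    using intp intq integrable_sqrt_mult[OF intp intq p0 q0] by simp
  have RN_p: "AE x in \<mu>. RN_deriv \<mu> (density M p) x = ennreal (density_ratio p q x)"
    unfolding \<mu>_def using AE_RN_deriv_density_add[OF _ _ p0 q0 intp intq] by simp
  have RN_q: "AE x in \<mu>. RN_deriv \<mu> (density M q) x = ennreal (density_ratio q p x)"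
  proof -
    have eq: "density M (\<lambda>x. q x + p x) = \<mu>"
      unfolding \<mu>_def by (simp add: add.commute)
    show ?thesis
      using AE_RN_deriv_density_add[OF assms(2,1) q0 p0 intq intp] unfolding eq .
  qed
  have sets_\<mu>: "sets \<mu> = sets M"
    unfolding \<mu>_def by simp
  have meas_\<mu>: "borel_measurable \<mu> = borel_measurable M"
    by (simp add: measurable_cong_sets[OF sets_\<mu> refl])
  have [measurable]: "density_ratio p q \<in> borel_measurable M" "density_ratio q p \<in> borel_measurable M"
    unfolding density_ratio_def by measurable
  have "(\<integral>x. (sqrt (enn2real (RN_deriv \<mu> (density M p) x)) - sqrt (enn2real (RN_deriv \<mu> (density M q) x)))\<^sup>2 \<partial>\<mu>)
     = (\<integral>x. (sqrt (density_ratio p q x) - sqrt (density_ratio q p x))\<^sup>2 \<partial>\<mu>)" (is "?I = _")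
    apply (rule integral_cong_AE)
    subgoal using borel_measurable_RN_deriv[of \<mu>] unfolding meas_\<mu> by measurable
    subgoal unfolding meas_\<mu> by measurable
    subgoal using RN_p RN_q by eventually_elim (simp add: density_ratio_nonneg p0 q0)
    done
  also have "\<dots> = 2 - 2 * (\<integral>x. sqrt (p x * q x) \<partial>M)"
    unfolding \<mu>_def integral_sum[symmetric] using p0 q0
    by (subst integral_density) (auto simp: add_mult_sqrt_density_ratio_diff_sq)
  finally have "?I = 2 - 2 * (\<integral>x. sqrt (p x * q x) \<partial>M)" .
  moreover have "0 \<le> ?I"
    by (rule integral_nonneg_AE) simp
  ultimately show ?thesis
    unfolding hellinger_def Let_def sum_measure_density[OF assms(1-4), folded \<mu>_def] by simp
qed

lemma nn_integral_sqrt_mult_le: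
  fixes f g :: "'a \<Rightarrow> real"
  assumes [measurable]: "f \<in> borel_measurable M" "g \<in> borel_measurable M"
    and f0: "\<And>x. 0 \<le> f x" and g0: "\<And>x. 0 \<le> g x"
    and If: "(\<integral>\<^sup>+x. f x \<partial>M) = ennreal a" and Ig: "(\<integral>\<^sup>+x. g x \<partial>M) = ennreal b"
    and a0: "0 \<le> a" and b0: "0 \<le> b"
  shows "(\<integral>\<^sup>+x. ennreal (sqrt (f x * g x)) \<partial>M) \<le> ennreal (sqrt (a * b))"
proof -
  have sq: "(\<lambda>x. (ennreal (sqrt (h x)))\<^sup>2) = (\<lambda>x. ennreal (h x))" if "\<And>x. 0 \<le> h x" for h :: "'a \<Rightarrow> real"
    using that by (auto simp: ennreal_power)
  have "(\<integral>\<^sup>+x. ennreal (sqrt (f x)) * ennreal (sqrt (g x)) \<partial>M)\<^sup>2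
     \<le> (\<integral>\<^sup>+x. (ennreal (sqrt (f x)))\<^sup>2 \<partial>M) * (\<integral>\<^sup>+x. (ennreal (sqrt (g x)))\<^sup>2 \<partial>M)"
    by (rule Cauchy_Schwarz_nn_integral) auto
  moreover have "(\<lambda>x. ennreal (sqrt (f x)) * ennreal (sqrt (g x))) = (\<lambda>x. ennreal (sqrt (f x * g x)))"
    using f0 g0 by (auto simp: ennreal_mult[symmetric] real_sqrt_mult)
  ultimately have le: "(\<integral>\<^sup>+x. ennreal (sqrt (f x * g x)) \<partial>M)\<^sup>2 \<le> ennreal (a * b)"
    using a0 b0 by (simp only: sq[OF f0] sq[OF g0] If Ig ennreal_mult)
  then have "(\<integral>\<^sup>+x. ennreal (sqrt (f x * g x)) \<partial>M) \<noteq> \<top>"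
    by (auto simp: power2_eq_square top_unique)
  then obtain t where t: "(\<integral>\<^sup>+x. ennreal (sqrt (f x * g x)) \<partial>M) = ennreal t" "0 \<le> t"
    using ennreal_cases by (metis ennreal_0 less_eq_real_def not_less top.not_eq_extremum)
  then have "t\<^sup>2 \<le> a * b"
    using le a0 b0 by (simp add: ennreal_power ennreal_le_iff)
  then show ?thesis
    using t real_le_rsqrt by (simp add: ennreal_leI)
qed

lemma suminf_sqrt_mult_le:
  fixes a b :: "nat \<Rightarrow> real"
  assumes a0: "\<And>n. 0 \<le> a n" and b0: "\<And>n. 0 \<le> b n" and "summable a" "summable b"
  shows "(\<Sum>n. ennreal (sqrt (a n * b n))) \<le> ennreal (sqrt ((\<Sum>n. a n) * (\<Sum>n. b n)))"
proof -
  have "(\<integral>\<^sup>+n. ennreal (sqrt (a n * b n)) \<partial>count_space UNIV) \<le> ennreal (sqrt ((\<Sum>n. a n) * (\<Sum>n. b n)))"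
    by (rule nn_integral_sqrt_mult_le)
      (use assms in \<open>auto simp: nn_integral_count_space_nat suminf_ennreal2 intro: suminf_nonneg\<close>)
  then show ?thesis by (simp add: nn_integral_count_space_nat)
qed

section \<open>Compound Poisson densities\<close>

definition mass :: "(real \<Rightarrow> real) \<Rightarrow> real" where
  "mass r = (\<integral>x. r x \<partial>lborel)"

definition fourier :: "(real \<Rightarrow> real) \<Rightarrow> real \<Rightarrow> complex" where
  "fourier f u = (\<integral>x. f x *\<^sub>R iexp (u * x) \<partial>lborel)"

primrec conv_pow :: "(real \<Rightarrow> real) \<Rightarrow> (real \<Rightarrow> real) \<Rightarrow> nat \<Rightarrow> real \<Rightarrow> real" where
  "conv_pow k r 0 = k"
| "conv_pow k r (Suc n) = (\<lambda>x. \<integral>y. conv_pow k r n (x - y) * r y \<partial>lborel)"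

text \<open>The density of the law with density \<open>k\<close> convolved with the compound Poisson law of
  finite Levy measure \<open>r(x) dx\<close>.\<close>
definition cpoisson_density :: "(real \<Rightarrow> real) \<Rightarrow> (real \<Rightarrow> real) \<Rightarrow> real \<Rightarrow> real" where
  "cpoisson_density k r x = exp (- mass r) * (\<Sum>n. conv_pow k r n x / fact n)"

lemma nn_integral_shift:
  fixes f :: "real \<Rightarrow> ennreal"
  assumes [measurable]: "f \<in> borel_measurable borel"
  shows "(\<integral>\<^sup>+x. f (x - y) \<partial>lborel) = (\<integral>\<^sup>+x. f x \<partial>lborel)"
  using nn_integral_real_affine[of f 1 "-y"] by simp

locale compound_poisson =
  fixes k :: "real \<Rightarrow> real" and K :: real and r :: "real \<Rightarrow> real"
  assumes k_measurable[measurable]: "k \<in> borel_measurable borel"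
    and k_nonneg: "\<And>x. 0 \<le> k x" and k_le: "\<And>x. k x \<le> K"
    and nn_integral_k: "(\<integral>\<^sup>+x. k x \<partial>lborel) = 1"
    and r_measurable[measurable]: "r \<in> borel_measurable borel"
    and r_nonneg: "\<And>x. 0 \<le> r x" and r_integrable: "integrable lborel r"
begin

lemma nn_integral_r: "(\<integral>\<^sup>+x. r x \<partial>lborel) = ennreal (mass r)"
  unfolding mass_def using r_integrable r_nonneg by (simp add: nn_integral_eq_integral)

lemma mass_nonneg: "0 \<le> mass r"
  unfolding mass_def using r_nonneg by simp

lemma integrable_shift_mult_r:
  assumes [measurable]: "f \<in> borel_measurable borel" and "\<And>x. 0 \<le> f x" "\<And>x. f x \<le> B"
  shows "integrable lborel (\<lambda>y. f (x - y) * r y)"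
proof (rule Bochner_Integration.integrable_bound[of _ "\<lambda>y. B * r y"])
  show "AE y in lborel. norm (f (x - y) * r y) \<le> norm (B * r y)"
    using assms(2,3) r_nonneg order_trans[OF assms(2,3)]
    by (intro AE_I2) (simp add: abs_mult mult_right_mono)
qed (use r_integrable in simp_all)

lemma conv_pow_measurable_bounded_integral:
  "conv_pow k r n \<in> borel_measurable borel \<and> (\<forall>x. 0 \<le> conv_pow k r n x \<and> conv_pow k r n x \<le> K * mass r ^ n)
   \<and> (\<integral>\<^sup>+x. conv_pow k r n x \<partial>lborel) = ennreal (mass r ^ n)"
proof (induction n)
  case 0
  then show ?case using k_nonneg k_le nn_integral_k by simp
next
  case (Suc n)
  have [measurable]: "conv_pow k r n \<in> borel_measurable borel"
    and bounds: "\<And>x. 0 \<le> conv_pow k r n x" "\<And>x. conv_pow k r n x \<le> K * mass r ^ n"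
    and nn_int: "(\<integral>\<^sup>+x. conv_pow k r n x \<partial>lborel) = ennreal (mass r ^ n)"
    using Suc by auto
  note integrable = integrable_shift_mult_r[of "conv_pow k r n", OF _ bounds]
  have "conv_pow k r (Suc n) x \<le> (\<integral>y. (K * mass r ^ n) * r y \<partial>lborel)" for x
    unfolding conv_pow.simps
    by (rule integral_mono) (use integrable r_integrable bounds r_nonneg in \<open>auto intro!: mult_right_mono\<close>)
  then have le: "conv_pow k r (Suc n) x \<le> K * mass r ^ Suc n" for x
    by (simp add: mass_def ac_simps)
  have "ennreal (conv_pow k r (Suc n) x) = (\<integral>\<^sup>+y. ennreal (conv_pow k r n (x - y) * r y) \<partial>lborel)" for x
    using integrable[of x] bounds r_nonneg by (simp add: nn_integral_eq_integral)
  then have eq: "ennreal (conv_pow k r (Suc n) x) = (\<integral>\<^sup>+y. ennreal (conv_pow k r n (x - y)) * ennreal (r y) \<partial>lborel)" for x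
    using bounds r_nonneg by (simp add: ennreal_mult)
  have "(\<integral>\<^sup>+x. conv_pow k r (Suc n) x \<partial>lborel) = (\<integral>\<^sup>+y. \<integral>\<^sup>+x. ennreal (conv_pow k r n (x - y)) * ennreal (r y) \<partial>lborel \<partial>lborel)"
    unfolding eq by (rule lborel_pair.Fubini'[symmetric]) measurable
  also have "\<dots> = (\<integral>\<^sup>+y. ennreal (r y) * \<integral>\<^sup>+x. ennreal (conv_pow k r n (x - y)) \<partial>lborel \<partial>lborel)"
    by (simp add: nn_integral_cmult mult.commute)
  also have "\<dots> = (\<integral>\<^sup>+y. ennreal (r y) * ennreal (mass r ^ n) \<partial>lborel)"
    by (subst nn_integral_shift[of "\<lambda>x. ennreal (conv_pow k r n x)"]) (auto simp: nn_int)
  also have "\<dots> = ennreal (mass r ^ Suc n)"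
    using nn_integral_r mass_nonneg by (simp add: nn_integral_multc ennreal_mult[symmetric] mult.commute)
  finally show ?case
    using le bounds r_nonneg by (auto intro: integral_nonneg)
qed

lemma conv_pow_measurable[measurable]: "conv_pow k r n \<in> borel_measurable borel"
  and conv_pow_nonneg: "0 \<le> conv_pow k r n x"
  and conv_pow_le: "conv_pow k r n x \<le> K * mass r ^ n"
  and nn_integral_conv_pow: "(\<integral>\<^sup>+x. conv_pow k r n x \<partial>lborel) = ennreal (mass r ^ n)"
  using conv_pow_measurable_bounded_integral by blast+

lemma integrable_conv_pow: "integrable lborel (conv_pow k r n)"
  using nn_integral_conv_pow conv_pow_nonneg by (intro integrableI_nn_integral_finite) auto

lemma integral_conv_pow: "(\<integral>x. conv_pow k r n x \<partial>lborel) = mass r ^ n"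
  using nn_integral_conv_pow conv_pow_nonneg mass_nonneg by (subst integral_eq_nn_integral) auto

lemma integrable_conv_pow_shift_mult: "integrable lborel (\<lambda>y. conv_pow k r n (x - y) * r y)"
  by (rule integrable_shift_mult_r) (auto intro: conv_pow_nonneg conv_pow_le)

lemma ennreal_conv_pow_Suc:
  "ennreal (conv_pow k r (Suc n) x) = (\<integral>\<^sup>+y. ennreal (conv_pow k r n (x - y) * r y) \<partial>lborel)"
  using integrable_conv_pow_shift_mult[of n x] conv_pow_nonneg r_nonneg
  by (simp add: nn_integral_eq_integral)

lemma summable_conv_pow: "summable (\<lambda>n. conv_pow k r n x / fact n)"
proof (rule summable_comparison_test'[of "\<lambda>n. K * (mass r ^ n / fact n)"])
  show "summable (\<lambda>n. K * (mass r ^ n / fact n))"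
    using exp_converges[of "mass r"] by (intro summable_mult) (simp add: sums_iff divide_inverse mult.commute)
  show "norm (conv_pow k r n x / fact n) \<le> K * (mass r ^ n / fact n)" for n
    using conv_pow_nonneg[of n x] conv_pow_le[of n x] by (simp add: divide_right_mono)
qed

lemma cpoisson_density_measurable[measurable]: "cpoisson_density k r \<in> borel_measurable borel"
  unfolding cpoisson_density_def by measurable

lemma cpoisson_density_nonneg: "0 \<le> cpoisson_density k r x"
  unfolding cpoisson_density_def using summable_conv_pow conv_pow_nonneg
  by (intro mult_nonneg_nonneg suminf_nonneg) auto

lemma nn_integral_cpoisson_density: "(\<integral>\<^sup>+x. cpoisson_density k r x \<partial>lborel) = 1"
proof -
  have "0 \<le> (\<Sum>n. conv_pow k r n x / fact n)" for x
    using summable_conv_pow conv_pow_nonneg by (intro suminf_nonneg) auto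
  then have "ennreal (cpoisson_density k r x) = ennreal (exp (- mass r)) * (\<Sum>n. ennreal (conv_pow k r n x / fact n))" for x
    unfolding cpoisson_density_def using summable_conv_pow conv_pow_nonneg
    by (subst suminf_ennreal2) (auto simp: ennreal_mult)
  moreover have "(\<integral>\<^sup>+x. ennreal (conv_pow k r n x / fact n) \<partial>lborel) = ennreal (mass r ^ n / fact n)" for n
    using conv_pow_nonneg mass_nonneg
    by (simp add: divide_inverse ennreal_mult nn_integral_multc nn_integral_conv_pow)
  moreover have "(\<Sum>n. ennreal (mass r ^ n / fact n)) = ennreal (exp (mass r))"
    using exp_converges[of "mass r"] mass_nonneg
    by (intro suminf_ennreal_eq) (auto simp: divide_inverse mult.commute)
  ultimately show ?thesis
    by (simp add: nn_integral_cmult nn_integral_suminf ennreal_mult[symmetric] mult_exp_exp)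
qed

lemma integrable_cpoisson_density: "integrable lborel (cpoisson_density k r)"
  using nn_integral_cpoisson_density cpoisson_density_nonneg
  by (intro integrableI_nn_integral_finite) auto

lemma real_distribution_cpoisson_density: "real_distribution (density lborel (cpoisson_density k r))"
proof -
  have "prob_space (density lborel (cpoisson_density k r))"
    by (rule prob_spaceI) (simp add: emeasure_density nn_integral_cpoisson_density)
  then show ?thesis unfolding real_distribution_def real_distribution_axioms_def by simp
qed

lemma integrable_iexp_minus_one_mult_r: "integrable lborel (\<lambda>x. (iexp (u * x) - 1) * of_real (r x))"
proof (rule Bochner_Integration.integrable_bound[of _ "\<lambda>x. 2 * r x"])
  show "AE x in lborel. norm ((iexp (u * x) - 1) * of_real (r x)) \<le> norm (2 * r x)"
  proof (rule AE_I2)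
    fix x
    have "norm (iexp (u * x) - 1) \<le> 2"
      using norm_triangle_ineq4[of "iexp (u * x)" 1] by (simp add: norm_exp_eq_Re)
    then show "norm ((iexp (u * x) - 1) * of_real (r x)) \<le> norm (2 * r x)"
      using r_nonneg[of x] by (simp add: norm_mult mult_right_mono)
  qed
qed (use r_integrable in simp_all)

lemma integral_iexp_minus_one_mult_r:
  "(\<integral>x. (iexp (u * x) - 1) * of_real (r x) \<partial>lborel) = fourier r u - mass r"
proof -
  have "integrable lborel (\<lambda>x. r x *\<^sub>R iexp (u * x))"
    by (rule Bochner_Integration.integrable_bound[of _ r]) (use r_integrable in \<open>simp_all add: norm_exp_eq_Re\<close>)
  moreover have "(\<integral>x. (iexp (u * x) - 1) * of_real (r x) \<partial>lborel) = (\<integral>x. r x *\<^sub>R iexp (u * x) - of_real (r x) \<partial>lborel)"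
    by (rule Bochner_Integration.integral_cong) (simp_all add: scaleR_conv_of_real algebra_simps)
  ultimately show ?thesis
    unfolding fourier_def mass_def using r_integrable by (subst (asm) Bochner_Integration.integral_diff) auto
qed

lemma fourier_conv:
  assumes [measurable]: "f \<in> borel_measurable borel"
    and f: "\<And>x. 0 \<le> f x" "\<And>x. f x \<le> B"
    and integrable_conv: "integrable lborel (\<lambda>x. \<integral>y. f (x - y) * r y \<partial>lborel)"
  shows "fourier (\<lambda>x. \<integral>y. f (x - y) * r y \<partial>lborel) u = fourier f u * fourier r u"
proof -
  define g where "g x y = (f (x - y) * r y) *\<^sub>R iexp (u * x)" for x y
  have [measurable]: "(\<lambda>(x, y). g x y) \<in> borel_measurable (lborel \<Otimes>\<^sub>M lborel)"
    unfolding g_def by measurable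
  have integrable_shift: "integrable lborel (\<lambda>y. f (x - y) * r y)" for x
    by (rule integrable_shift_mult_r[OF _ f(1,2)]) simp
  have "(\<lambda>x. \<integral>y. norm (g x y) \<partial>lborel) = (\<lambda>x. \<integral>y. f (x - y) * r y \<partial>lborel)"
    unfolding g_def using f(1) r_nonneg by (simp add: norm_exp_eq_Re)
  then have integrable_g: "integrable (lborel \<Otimes>\<^sub>M lborel) (\<lambda>(x, y). g x y)"
    using integrable_shift integrable_conv
    by (intro lborel_pair.Fubini_integrable) (auto simp: g_def)
  have inner: "(\<integral>x. g x y \<partial>lborel) = (r y *\<^sub>R iexp (u * y)) * (\<integral>x. f x *\<^sub>R iexp (u * x) \<partial>lborel)" for y
  proof -
    have "g x y = (r y *\<^sub>R iexp (u * y)) * (f (x - y) *\<^sub>R iexp (u * (x - y)))" for x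
      unfolding g_def by (simp add: scaleR_conv_of_real exp_add[symmetric] algebra_simps)
    then have "(\<integral>x. g x y \<partial>lborel) = (\<integral>x. (r y *\<^sub>R iexp (u * y)) * (f (x - y) *\<^sub>R iexp (u * (x - y))) \<partial>lborel)"
      by simp
    also have "\<dots> = (r y *\<^sub>R iexp (u * y)) * (\<integral>x. f (x - y) *\<^sub>R iexp (u * (x - y)) \<partial>lborel)"
      by (rule integral_mult_right_zero)
    also have "(\<integral>x. f (x - y) *\<^sub>R iexp (u * (x - y)) \<partial>lborel) = (\<integral>x. f x *\<^sub>R iexp (u * x) \<partial>lborel)"
      using lborel_integral_real_affine[of 1 "\<lambda>x. f x *\<^sub>R iexp (u * x)" "-y"] by simp
    finally show ?thesis .
  qed
  have "(\<integral>x. (\<integral>y. f (x - y) * r y \<partial>lborel) *\<^sub>R iexp (u * x) \<partial>lborel) = (\<integral>x. \<integral>y. g x y \<partial>lborel \<partial>lborel)"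
    unfolding g_def using integrable_shift by (intro Bochner_Integration.integral_cong refl integral_scaleR_left[symmetric])
  also have "\<dots> = (\<integral>y. \<integral>x. g x y \<partial>lborel \<partial>lborel)"
    using lborel_pair.Fubini_integral[OF integrable_g] by simp
  also have "\<dots> = (\<integral>y. (r y *\<^sub>R iexp (u * y)) * (\<integral>x. f x *\<^sub>R iexp (u * x) \<partial>lborel) \<partial>lborel)"
    by (simp only: inner)
  also have "\<dots> = (\<integral>y. r y *\<^sub>R iexp (u * y) \<partial>lborel) * (\<integral>x. f x *\<^sub>R iexp (u * x) \<partial>lborel)"
    by (rule integral_mult_left_zero)
  finally show ?thesis
    unfolding fourier_def by (simp only: mult.commute)
qed

lemma fourier_conv_pow: "fourier (conv_pow k r n) u = char (density lborel k) u * fourier r u ^ n"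
proof (induction n)
  case 0
  show ?case unfolding char_def fourier_def using k_nonneg by (simp add: integral_density)
next
  case (Suc n)
  then show ?case
    using fourier_conv[OF conv_pow_measurable conv_pow_nonneg conv_pow_le, of n u] integrable_conv_pow[of "Suc n"]
    by simp
qed

lemma char_cpoisson_density:
  "char (density lborel (cpoisson_density k r)) u = char (density lborel k) u * exp (fourier r u - mass r)"
proof -
  define f where "f n x = (conv_pow k r n x / fact n) *\<^sub>R iexp (u * x)" for n x
  have norm_f: "norm (f n x) = conv_pow k r n x / fact n" for n x
    unfolding f_def using conv_pow_nonneg[of n x] by (simp add: norm_exp_eq_Re)
  have integrable_f: "integrable lborel (f n)" for n
  proof (rule Bochner_Integration.integrable_bound[of _ "\<lambda>x. conv_pow k r n x / fact n"])
    show "integrable lborel (\<lambda>x. conv_pow k r n x / fact n)"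
      using integrable_conv_pow[of n] by simp
    show "AE x in lborel. norm (f n x) \<le> norm (conv_pow k r n x / fact n)"
      using conv_pow_nonneg by (simp add: norm_f)
  qed (unfold f_def, measurable)
  have summable_integral: "summable (\<lambda>n. \<integral>x. norm (f n x) \<partial>lborel)"
    unfolding norm_f using integral_conv_pow exp_converges[of "mass r"]
    by (simp add: sums_iff divide_inverse mult.commute)
  have "(\<Sum>n. f n x) = (\<Sum>n. conv_pow k r n x / fact n) *\<^sub>R iexp (u * x)" for x
    unfolding f_def by (rule suminf_scaleR_left[symmetric]) (rule summable_conv_pow)
  then have "cpoisson_density k r x *\<^sub>R iexp (u * x) = exp (- mass r) *\<^sub>R (\<Sum>n. f n x)" for x
    unfolding cpoisson_density_def by simp
  then have "char (density lborel (cpoisson_density k r)) u = (\<integral>x. exp (- mass r) *\<^sub>R (\<Sum>n. f n x) \<partial>lborel)"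
    unfolding char_def using cpoisson_density_nonneg by (subst integral_density) auto
  also have "\<dots> = exp (- mass r) *\<^sub>R (\<Sum>n. \<integral>x. f n x \<partial>lborel)"
    using integral_suminf[OF integrable_f _ summable_integral] summable_conv_pow by (simp add: norm_f)
  also have "(\<lambda>n. \<integral>x. f n x \<partial>lborel) = (\<lambda>n. char (density lborel k) u * (fourier r u ^ n /\<^sub>R fact n))"
  proof
    fix n
    have "(\<integral>x. f n x \<partial>lborel) = (1 / fact n) *\<^sub>R fourier (conv_pow k r n) u"
      unfolding f_def fourier_def by (simp flip: integral_scaleR_right)
    then show "(\<integral>x. f n x \<partial>lborel) = char (density lborel k) u * (fourier r u ^ n /\<^sub>R fact n)"
      unfolding fourier_conv_pow by (simp add: scaleR_conv_of_real divide_inverse ac_simps)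
  qed
  also have "(\<Sum>n. char (density lborel k) u * (fourier r u ^ n /\<^sub>R fact n)) = char (density lborel k) u * exp (fourier r u)"
    using exp_converges[of "fourier r u"] by (metis sums_iff suminf_mult)
  finally show ?thesis
    by (simp add: scaleR_conv_of_real exp_diff exp_of_real[symmetric] exp_minus divide_inverse ac_simps)
qed

end

locale compound_poisson_pair = cp0: compound_poisson k K r0 + cp1: compound_poisson k K r1 for k K r0 r1
begin

lemma integrable_sqrt_r0_r1: "integrable lborel (\<lambda>x. sqrt (r0 x * r1 x))"
  by (rule integrable_sqrt_mult) (use cp0.r_integrable cp1.r_integrable cp0.r_nonneg cp1.r_nonneg in auto)

text \<open>Cauchy-Schwarz under the convolution integral defining \<open>conv_pow k r (Suc n) x\<close>.\<close>
lemma nn_integral_sqrt_conv_le: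
  "(\<integral>\<^sup>+y. ennreal (sqrt (conv_pow k r0 n (x - y) * conv_pow k r1 n (x - y)) * sqrt (r0 y * r1 y)) \<partial>lborel)
     \<le> ennreal (sqrt (conv_pow k r0 (Suc n) x * conv_pow k r1 (Suc n) x))"
proof -
  have "(\<integral>\<^sup>+y. ennreal (sqrt ((conv_pow k r0 n (x - y) * r0 y) * (conv_pow k r1 n (x - y) * r1 y))) \<partial>lborel)
      \<le> ennreal (sqrt (conv_pow k r0 (Suc n) x * conv_pow k r1 (Suc n) x))"
    by (rule nn_integral_sqrt_mult_le)
      (use cp0.conv_pow_nonneg cp1.conv_pow_nonneg cp0.r_nonneg cp1.r_nonneg
        cp0.ennreal_conv_pow_Suc cp1.ennreal_conv_pow_Suc in auto)
  moreover have "sqrt ((conv_pow k r0 n (x - y) * r0 y) * (conv_pow k r1 n (x - y) * r1 y))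
      = sqrt (conv_pow k r0 n (x - y) * conv_pow k r1 n (x - y)) * sqrt (r0 y * r1 y)" for y
    by (simp add: real_sqrt_mult[symmetric] ac_simps)
  ultimately show ?thesis by simp
qed

lemma nn_integral_sqrt_conv_pow_ge:
  "ennreal ((\<integral>x. sqrt (r0 x * r1 x) \<partial>lborel) ^ n)
     \<le> (\<integral>\<^sup>+x. ennreal (sqrt (conv_pow k r0 n x * conv_pow k r1 n x)) \<partial>lborel)"
proof (induction n)
  case 0
  show ?case using cp0.k_nonneg cp0.nn_integral_k by simp
next
  case (Suc n)
  define h where "h x = sqrt (conv_pow k r0 n x * conv_pow k r1 n x)" for x
  define g where "g y = sqrt (r0 y * r1 y)" for y
  have [measurable]: "h \<in> borel_measurable borel" "g \<in> borel_measurable borel"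
    unfolding h_def g_def by measurable
  have nn_integral_g: "(\<integral>\<^sup>+y. ennreal (g y) \<partial>lborel) = ennreal (\<integral>x. sqrt (r0 x * r1 x) \<partial>lborel)"
    unfolding g_def using integrable_sqrt_r0_r1 cp0.r_nonneg cp1.r_nonneg by (simp add: nn_integral_eq_integral)
  have "ennreal ((\<integral>x. sqrt (r0 x * r1 x) \<partial>lborel) ^ Suc n)
      = ennreal (\<integral>x. sqrt (r0 x * r1 x) \<partial>lborel) * ennreal ((\<integral>x. sqrt (r0 x * r1 x) \<partial>lborel) ^ n)"
    using cp0.r_nonneg cp1.r_nonneg by (simp add: ennreal_mult[symmetric] integral_nonneg)
  also have "\<dots> \<le> (\<integral>\<^sup>+y. ennreal (g y) \<partial>lborel) * (\<integral>\<^sup>+x. ennreal (h x) \<partial>lborel)"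
    using Suc unfolding h_def nn_integral_g by (intro mult_left_mono) auto
  also have "\<dots> = (\<integral>\<^sup>+y. ennreal (g y) * (\<integral>\<^sup>+x. ennreal (h (x - y)) \<partial>lborel) \<partial>lborel)"
    by (subst nn_integral_shift) (simp_all add: nn_integral_multc)
  also have "\<dots> = (\<integral>\<^sup>+y. \<integral>\<^sup>+x. ennreal (h (x - y)) * ennreal (g y) \<partial>lborel \<partial>lborel)"
    by (simp add: nn_integral_cmult mult.commute)
  also have "\<dots> = (\<integral>\<^sup>+x. \<integral>\<^sup>+y. ennreal (h (x - y)) * ennreal (g y) \<partial>lborel \<partial>lborel)"
    by (rule lborel_pair.Fubini') measurable
  also have "\<dots> = (\<integral>\<^sup>+x. \<integral>\<^sup>+y. ennreal (h (x - y) * g y) \<partial>lborel \<partial>lborel)"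
    unfolding h_def g_def using cp0.conv_pow_nonneg cp1.conv_pow_nonneg cp0.r_nonneg cp1.r_nonneg
    by (simp add: ennreal_mult)
  also have "\<dots> \<le> (\<integral>\<^sup>+x. ennreal (sqrt (conv_pow k r0 (Suc n) x * conv_pow k r1 (Suc n) x)) \<partial>lborel)"
    unfolding h_def g_def by (intro nn_integral_mono nn_integral_sqrt_conv_le)
  finally show ?case .
qed

lemma sqrt_cpoisson_density_mult_ge:
  "ennreal (exp (- (mass r0 + mass r1) / 2)) * (\<Sum>n. ennreal (sqrt (conv_pow k r0 n x * conv_pow k r1 n x) / fact n))
     \<le> ennreal (sqrt (cpoisson_density k r0 x * cpoisson_density k r1 x))"
proof -
  define S0 where "S0 = (\<Sum>n. conv_pow k r0 n x / fact n)"
  define S1 where "S1 = (\<Sum>n. conv_pow k r1 n x / fact n)"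
  have "0 \<le> S0" "0 \<le> S1"
    unfolding S0_def S1_def using cp0.summable_conv_pow cp1.summable_conv_pow cp0.conv_pow_nonneg cp1.conv_pow_nonneg
    by (auto intro: suminf_nonneg)
  have "sqrt (conv_pow k r0 n x * conv_pow k r1 n x) / fact n
      = sqrt ((conv_pow k r0 n x / fact n) * (conv_pow k r1 n x / fact n))" for n
    by (metis power2_eq_square real_sqrt_abs abs_of_nonneg fact_ge_zero real_sqrt_divide times_divide_times_eq)
  then have "(\<Sum>n. ennreal (sqrt (conv_pow k r0 n x * conv_pow k r1 n x) / fact n)) \<le> ennreal (sqrt (S0 * S1))"
    unfolding S0_def S1_def
    by (simp only:) (rule suminf_sqrt_mult_le,
        use cp0.summable_conv_pow cp1.summable_conv_pow cp0.conv_pow_nonneg cp1.conv_pow_nonneg in auto)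
  moreover have "sqrt (cpoisson_density k r0 x * cpoisson_density k r1 x) = exp (- (mass r0 + mass r1) / 2) * sqrt (S0 * S1)"
  proof -
    have "exp (- mass r0) * exp (- mass r1) = (exp (- (mass r0 + mass r1) / 2))\<^sup>2"
      by (simp add: power2_eq_square mult_exp_exp)
    then show ?thesis
      unfolding cpoisson_density_def S0_def[symmetric] S1_def[symmetric]
      by (simp add: real_sqrt_mult ac_simps)
  qed
  ultimately show ?thesis
    using \<open>0 \<le> S0\<close> \<open>0 \<le> S1\<close> by (simp add: ennreal_mult mult_left_mono)
qed

lemma exp_integral_sqrt_le_suminf:
  "ennreal (exp (\<integral>x. sqrt (r0 x * r1 x) \<partial>lborel))
     \<le> (\<Sum>n. \<integral>\<^sup>+x. ennreal (sqrt (conv_pow k r0 n x * conv_pow k r1 n x) / fact n) \<partial>lborel)"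
proof -
  define c where "c = (\<integral>x. sqrt (r0 x * r1 x) \<partial>lborel)"
  have c_nonneg: "0 \<le> c"
    unfolding c_def using cp0.r_nonneg cp1.r_nonneg by (simp add: integral_nonneg)
  have term_le: "ennreal (c ^ n / fact n)
      \<le> (\<integral>\<^sup>+x. ennreal (sqrt (conv_pow k r0 n x * conv_pow k r1 n x) / fact n) \<partial>lborel)" for n
  proof -
    have "ennreal (c ^ n / fact n) = ennreal (c ^ n) * ennreal (1 / fact n)"
      using c_nonneg by (simp add: ennreal_mult[symmetric])
    also have "\<dots> \<le> (\<integral>\<^sup>+x. ennreal (sqrt (conv_pow k r0 n x * conv_pow k r1 n x)) \<partial>lborel) * ennreal (1 / fact n)"
      unfolding c_def by (intro mult_right_mono nn_integral_sqrt_conv_pow_ge) simp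
    also have "\<dots> = (\<integral>\<^sup>+x. ennreal (sqrt (conv_pow k r0 n x * conv_pow k r1 n x) / fact n) \<partial>lborel)"
      using cp0.conv_pow_nonneg cp1.conv_pow_nonneg
      by (simp add: nn_integral_multc[symmetric] ennreal_mult[symmetric])
    finally show ?thesis .
  qed
  have "ennreal (exp c) = (\<Sum>n. ennreal (c ^ n / fact n))"
    using exp_converges[of c] c_nonneg
    by (intro suminf_ennreal_eq[symmetric]) (auto simp: divide_inverse mult.commute)
  also have "\<dots> \<le> (\<Sum>n. \<integral>\<^sup>+x. ennreal (sqrt (conv_pow k r0 n x * conv_pow k r1 n x) / fact n) \<partial>lborel)"
    by (intro suminf_le term_le summableI)
  finally show ?thesis
    unfolding c_def .
qed

lemma hellinger_affinity_ge:
  "exp ((\<integral>x. sqrt (r0 x * r1 x) \<partial>lborel) - (mass r0 + mass r1) / 2)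
     \<le> (\<integral>x. sqrt (cpoisson_density k r0 x * cpoisson_density k r1 x) \<partial>lborel)"
proof -
  define c where "c = (\<integral>x. sqrt (r0 x * r1 x) \<partial>lborel)"
  define E where "E = exp (- (mass r0 + mass r1) / 2)"
  define s where "s n x = sqrt (conv_pow k r0 n x * conv_pow k r1 n x) / fact n" for n x
  have E_nonneg: "0 \<le> E"
    unfolding E_def by simp
  have [measurable]: "s n \<in> borel_measurable borel" for n
    unfolding s_def by measurable
  have integrable: "integrable lborel (\<lambda>x. sqrt (cpoisson_density k r0 x * cpoisson_density k r1 x))"
    by (rule integrable_sqrt_mult)
      (use cp0.integrable_cpoisson_density cp1.integrable_cpoisson_density
        cp0.cpoisson_density_nonneg cp1.cpoisson_density_nonneg in auto)
  have "ennreal E * ennreal (exp c) \<le> (\<integral>\<^sup>+x. ennreal E * (\<Sum>n. ennreal (s n x)) \<partial>lborel)"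
    using exp_integral_sqrt_le_suminf unfolding c_def[symmetric] s_def[symmetric]
    by (simp add: nn_integral_suminf nn_integral_cmult mult_left_mono)
  also have "\<dots> \<le> (\<integral>\<^sup>+x. ennreal (sqrt (cpoisson_density k r0 x * cpoisson_density k r1 x)) \<partial>lborel)"
    unfolding E_def s_def by (intro nn_integral_mono sqrt_cpoisson_density_mult_ge)
  also have "\<dots> = ennreal (\<integral>x. sqrt (cpoisson_density k r0 x * cpoisson_density k r1 x) \<partial>lborel)"
    using integrable by (rule nn_integral_eq_integral) (use cp0.cpoisson_density_nonneg cp1.cpoisson_density_nonneg in simp)
  finally have "ennreal (E * exp c) \<le> ennreal (\<integral>x. sqrt (cpoisson_density k r0 x * cpoisson_density k r1 x) \<partial>lborel)"
    by (simp only: ennreal_mult[OF E_nonneg exp_ge_zero])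
  moreover have "E * exp c = exp (c - (mass r0 + mass r1) / 2)"
    unfolding E_def mult_exp_exp by (rule arg_cong[where f = exp]) linarith
  ultimately show ?thesis
    unfolding c_def using cp0.cpoisson_density_nonneg cp1.cpoisson_density_nonneg by (simp add: ennreal_le_iff integral_nonneg)
qed

lemma integral_sqrt_diff_sq:
  "integrable lborel (\<lambda>x. (sqrt (r0 x) - sqrt (r1 x))\<^sup>2)"
  "(\<integral>x. (sqrt (r0 x) - sqrt (r1 x))\<^sup>2 \<partial>lborel) = mass r0 + mass r1 - 2 * (\<integral>x. sqrt (r0 x * r1 x) \<partial>lborel)"
proof -
  have eq: "(\<lambda>x. (sqrt (r0 x) - sqrt (r1 x))\<^sup>2) = (\<lambda>x. r0 x + r1 x - 2 * sqrt (r0 x * r1 x))"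
    using cp0.r_nonneg cp1.r_nonneg by (auto simp: power2_diff real_sqrt_mult)
  show "integrable lborel (\<lambda>x. (sqrt (r0 x) - sqrt (r1 x))\<^sup>2)"
    unfolding eq using cp0.r_integrable cp1.r_integrable integrable_sqrt_r0_r1 by simp
  show "(\<integral>x. (sqrt (r0 x) - sqrt (r1 x))\<^sup>2 \<partial>lborel) = mass r0 + mass r1 - 2 * (\<integral>x. sqrt (r0 x * r1 x) \<partial>lborel)"
    unfolding eq mass_def using cp0.r_integrable cp1.r_integrable integrable_sqrt_r0_r1 by simp
qed

lemma hellinger_cpoisson_sq_le:
  "(hellinger (density lborel (cpoisson_density k r0)) (density lborel (cpoisson_density k r1)))\<^sup>2
     \<le> (\<integral>x. (sqrt (r0 x) - sqrt (r1 x))\<^sup>2 \<partial>lborel) / 2"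
proof -
  have "(hellinger (density lborel (cpoisson_density k r0)) (density lborel (cpoisson_density k r1)))\<^sup>2
      = 1 - (\<integral>x. sqrt (cpoisson_density k r0 x * cpoisson_density k r1 x) \<partial>lborel)"
    by (rule hellinger_density_sq)
      (use cp0.cpoisson_density_nonneg cp1.cpoisson_density_nonneg
        cp0.nn_integral_cpoisson_density cp1.nn_integral_cpoisson_density in auto)
  also have "\<dots> \<le> 1 - exp ((\<integral>x. sqrt (r0 x * r1 x) \<partial>lborel) - (mass r0 + mass r1) / 2)"
    using hellinger_affinity_ge by simp
  also have "\<dots> \<le> (mass r0 + mass r1) / 2 - (\<integral>x. sqrt (r0 x * r1 x) \<partial>lborel)"
    using exp_ge_add_one_self[of "(\<integral>x. sqrt (r0 x * r1 x) \<partial>lborel) - (mass r0 + mass r1) / 2"] by linarith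
  finally show ?thesis
    unfolding integral_sqrt_diff_sq(2) by (simp add: diff_divide_distrib)
qed

end

section \<open>The exponential law as an infinitely divisible law\<close>

lemma levy_dens_zero: "levy_dens A (\<lambda>_. 0) x = (if 0 < x then exp (- (A * x)) / x else 0)"
  by (simp add: levy_dens_def)

lemma levy_dens_measurable[measurable]:
  assumes [measurable]: "th \<in> borel_measurable borel"
  shows "levy_dens a th \<in> borel_measurable borel"
  unfolding levy_dens_def by measurable

lemma tendsto_exp_neg_mult_at_top:
  fixes a :: real assumes "0 < a"
  shows "((\<lambda>t. exp (- (t * a))) \<longlongrightarrow> 0) at_top"
  using assms by (auto intro!: exp_at_bot[THEN filterlim_compose] filterlim_tendsto_pos_mult_at_top filterlim_ident
      simp: filterlim_uminus_at_bot mult.commute[of _ a])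

lemma set_integrable_exp_neg_mult:
  fixes z :: complex assumes z: "0 < Re z"
  shows "set_integrable lborel {0<..} (\<lambda>x::real. exp (- (z * of_real x)))"
proof -
  have "set_integrable lborel (einterval 0 \<infinity>) (\<lambda>x. exp (- (x * Re z)))"
  proof (rule interval_integral_FTC_nonneg(1)[where F="\<lambda>x. - exp (- (x * Re z)) / Re z" and A="-1 / Re z" and B=0])
    show "((\<lambda>x. - exp (- (x * Re z)) / Re z) has_real_derivative exp (- (x * Re z))) (at x)" for x
      using z by (auto intro!: derivative_eq_intros)
    show "(((\<lambda>x. - exp (- (x * Re z)) / Re z) \<circ> real_of_ereal) \<longlongrightarrow> -1 / Re z) (at_right 0)"
      using z by (auto simp: zero_ereal_def ereal_tendsto_simps intro!: tendsto_eq_intros)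
    show "(((\<lambda>x. - exp (- (x * Re z)) / Re z) \<circ> real_of_ereal) \<longlongrightarrow> 0) (at_left \<infinity>)"
      using z unfolding ereal_tendsto_simps
      by (intro filterlim_compose[OF _ tendsto_exp_neg_mult_at_top]) (auto intro!: tendsto_eq_intros filterlim_ident)
  qed auto
  moreover have "einterval 0 \<infinity> = {0::real<..}"
    by (auto simp: einterval_iff zero_ereal_def)
  ultimately have "integrable lborel (\<lambda>x. indicat_real {0<..} x *\<^sub>R exp (- (x * Re z)))"
    by (simp add: set_integrable_def)
  then show ?thesis
    unfolding set_integrable_def
    by (rule Bochner_Integration.integrable_bound) (auto simp: indicator_def norm_exp_eq_Re mult.commute)
qed

lemma set_integral_exp_neg_mult:
  fixes z :: complex assumes z: "0 < Re z"
  shows "(LBINT x:{0<..}. exp (- (z * of_real x))) = 1 / z"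
proof -
  have zn: "z \<noteq> 0" using z by auto
  have "(LBINT x=0..\<infinity>. exp (- (z * of_real x))) = 0 - (- 1 / z)"
  proof (rule interval_integral_FTC_integrable[where F="\<lambda>x. - exp (- (z * of_real x)) / z"])
    show "((\<lambda>x. - exp (- (z * of_real x)) / z) has_vector_derivative exp (- (z * of_real x))) (at x)" for x
      using zn by (auto intro!: derivative_eq_intros has_vector_derivative_real_field)
    have "einterval 0 \<infinity> = {0::real<..}" by (auto simp: einterval_iff zero_ereal_def)
    then show "set_integrable lborel (einterval 0 \<infinity>) (\<lambda>x. exp (- (z * of_real x)))"
      using set_integrable_exp_neg_mult[OF z] by simp
    show "(((\<lambda>x. - exp (- (z * of_real x)) / z) \<circ> real_of_ereal) \<longlongrightarrow> - 1 / z) (at_right 0)"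
      using zn by (auto simp: zero_ereal_def ereal_tendsto_simps intro!: tendsto_eq_intros)
    have "((\<lambda>t::real. exp (- (z * of_real t))) \<longlongrightarrow> 0) at_top"
      by (rule tendsto_norm_zero_cancel)
        (use tendsto_exp_neg_mult_at_top[OF z] in \<open>simp add: norm_exp_eq_Re mult.commute\<close>)
    then have "((\<lambda>t::real. - exp (- (z * of_real t)) / z) \<longlongrightarrow> - 0 / z) at_top"
      by (intro tendsto_divide tendsto_minus tendsto_const) (use zn in auto)
    then show "(((\<lambda>x. - exp (- (z * of_real x)) / z) \<circ> real_of_ereal) \<longlongrightarrow> 0) (at_left \<infinity>)"
      unfolding ereal_tendsto_simps by simp
  qed (auto intro!: continuous_intros)
  then show ?thesis by (simp add: interval_integral_to_infinity_eq zero_ereal_def)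
qed

lemma integrable_exp_neg_mult:
  fixes A :: real assumes "0 < A"
  shows "integrable lborel (\<lambda>x. indicator {0<..} x * exp (- (A * x)))"
proof -
  have "integrable lborel (\<lambda>x. norm (indicator {0<..} x *\<^sub>R exp (- (complex_of_real A * of_real x))))"
    using set_integrable_exp_neg_mult[of "complex_of_real A"] assms unfolding set_integrable_def
    by (intro integrable_norm) simp
  then show ?thesis
    by (simp add: indicator_def norm_exp_eq_Re if_distrib cong: if_cong)
qed

lemma integral_exp_neg_mult:
  fixes c :: real assumes "0 < c"
  shows "(\<integral>x. indicator {0<..} x * exp (- (c * x)) \<partial>lborel) = 1 / c"
proof -
  have "complex_of_real (\<integral>x. indicator {0<..} x * exp (- (c * x)) \<partial>lborel)
      = (LBINT x:{0<..}. exp (- (complex_of_real c * of_real x)))"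
    unfolding integral_complex_of_real[symmetric] set_lebesgue_integral_def
    by (rule Bochner_Integration.integral_cong) (auto simp: indicator_def exp_of_real[symmetric])
  also have "\<dots> = complex_of_real (1 / c)"
    using assms by (simp add: set_integral_exp_neg_mult)
  finally show ?thesis
    using of_real_eq_iff by blast
qed

lemma char_exponential_density:
  assumes A: "0 < A"
  shows "char (density lborel (exponential_density A)) u = A / (A - \<i> * u)"
proof -
  define z where "z = complex_of_real A - \<i> * complex_of_real u"
  have z: "0 < Re z" using A by (simp add: z_def)
  have "AE x in lborel. exponential_density A x *\<^sub>R iexp (u * x)
      = complex_of_real A * (indicat_real {0<..} x *\<^sub>R exp (- (z * of_real x)))"
    using AE_lborel_singleton[of 0]
  proof eventually_elim
    case (elim x)
    have "exp (- (z * of_real x)) = exp (complex_of_real (- x * A)) * iexp (u * x)"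
      by (simp add: z_def exp_add[symmetric] algebra_simps)
    then show ?case
      using elim by (cases "0 < x") (simp_all add: exponential_density_def scaleR_conv_of_real mult.commute flip: exp_of_real)
  qed
  then have "char (density lborel (exponential_density A)) u
      = (\<integral>x. complex_of_real A * (indicat_real {0<..} x *\<^sub>R exp (- (z * of_real x))) \<partial>lborel)"
    unfolding char_def using A
    by (subst integral_density) (auto simp: exponential_density_def intro!: integral_cong_AE)
  also have "\<dots> = complex_of_real A * (LBINT x:{0<..}. exp (- (z * of_real x)))"
    unfolding set_lebesgue_integral_def by (rule integral_mult_right_zero)
  finally show ?thesis
    using set_integral_exp_neg_mult[OF z] by (simp add: z_def)
qed

lemma frullani_integrand_eq:
  fixes A u x :: real
  assumes x: "0 < x"
  shows "(iexp (u * x) - 1) * levy_dens A (\<lambda>_. 0) x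
       = (\<integral>t. indicator {0..1} t *\<^sub>R (\<i> * u * exp (- ((A - \<i> * u * of_real t) * x))) \<partial>lborel)"
proof -
  have "(LBINT t=ereal 0..ereal 1. \<i> * u * x * exp (\<i> * u * of_real t * x))
      = exp (\<i> * u * of_real 1 * x) - exp (\<i> * u * of_real 0 * x)"
    by (rule interval_integral_FTC_finite[where F="\<lambda>t. exp (\<i> * u * of_real t * x)"])
      (auto intro!: continuous_intros has_vector_derivative_at_within derivative_eq_intros
        has_vector_derivative_real_field simp: ac_simps)
  then have "(LBINT t:{0..1}. \<i> * u * x * exp (\<i> * u * of_real t * x)) = iexp (u * x) - 1"
    using interval_integral_Icc[of 0 1 "\<lambda>t. \<i> * u * x * exp (\<i> * u * of_real t * x)"] by (simp add: ac_simps)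
  then have "(iexp (u * x) - 1) * levy_dens A (\<lambda>_. 0) x
      = of_real (exp (- (A * x)) / x) * (LBINT t:{0..1}. \<i> * u * x * exp (\<i> * u * of_real t * x))"
    using x by (simp add: levy_dens_zero mult.commute)
  also have "\<dots> = (\<integral>t. of_real (exp (- (A * x)) / x) * (indicator {0..1} t *\<^sub>R (\<i> * u * x * exp (\<i> * u * of_real t * x))) \<partial>lborel)"
    unfolding set_lebesgue_integral_def by (rule integral_mult_right_zero[symmetric])
  also have "\<dots> = (\<integral>t. indicator {0..1} t *\<^sub>R (\<i> * u * exp (- ((A - \<i> * u * of_real t) * x))) \<partial>lborel)"
  proof (rule Bochner_Integration.integral_cong[OF refl])
    fix t :: real
    have "exp (- ((A - \<i> * u * of_real t) * x)) = of_real (exp (- (A * x))) * exp (\<i> * u * of_real t * x)"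
      by (simp add: exp_of_real[symmetric] exp_add[symmetric] algebra_simps)
    then show "of_real (exp (- (A * x)) / x) * (indicator {0..1} t *\<^sub>R (\<i> * u * x * exp (\<i> * u * of_real t * x)))
       = indicator {0..1} t *\<^sub>R (\<i> * u * exp (- ((A - \<i> * u * of_real t) * x)))"
      using x by (simp add: indicator_def field_simps)
  qed
  finally show ?thesis .
qed

lemma integrable_frullani_kernel:
  fixes A u :: real
  assumes A: "0 < A"
  shows "integrable (lborel \<Otimes>\<^sub>M lborel)
    (\<lambda>(x, t). indicator {0<..} x *\<^sub>R (indicator {0..1} t *\<^sub>R (\<i> * u * exp (- ((A - \<i> * u * of_real t) * of_real x)))))"
    (is "integrable _ (\<lambda>(x, t). ?h x t)")
proof (rule lborel_pair.Fubini_integrable)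
  have norm_h: "norm (?h x t) = (indicator {0<..} x * \<bar>u\<bar> * exp (- (A * x))) * indicator {0..1} t" for x t
    by (simp add: norm_mult norm_exp_eq_Re indicator_def)
  have "(\<integral>t. norm (?h x t) \<partial>lborel) = \<bar>u\<bar> * (indicator {0<..} x * exp (- (A * x)))" for x
    unfolding norm_h by (simp add: measure_lborel_Icc)
  then show "integrable lborel (\<lambda>x. \<integral>t. norm (case (x, t) of (x, t) \<Rightarrow> ?h x t) \<partial>lborel)"
    using integrable_exp_neg_mult[OF A] by simp
  show "AE x in lborel. integrable lborel (\<lambda>t. case (x, t) of (x, t) \<Rightarrow> ?h x t)"
  proof (rule AE_I2)
    fix x
    show "integrable lborel (\<lambda>t. case (x, t) of (x, t) \<Rightarrow> ?h x t)"
    proof (rule Bochner_Integration.integrable_bound[of _ "\<lambda>t. (indicator {0<..} x * \<bar>u\<bar> * exp (- (A * x))) * indicator {0..1::real} t"])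
      show "integrable lborel (\<lambda>t. (indicator {0<..} x * \<bar>u\<bar> * exp (- (A * x))) * indicator {0..1::real} t)"
        by (intro integrable_mult_right integrable_real_indicator) auto
      show "AE t in lborel. norm (case (x, t) of (x, t) \<Rightarrow> ?h x t)
          \<le> norm ((indicator {0<..} x * \<bar>u\<bar> * exp (- (A * x))) * indicator {0..1::real} t)"
        by (intro AE_I2) (simp only: prod.case norm_h, simp)
    qed (simp only: prod.case, measurable)
  qed
qed measurable

lemma interval_integral_Ln:
  fixes A u :: real
  assumes A: "0 < A"
  shows "(LBINT t=ereal 0..ereal 1. \<i> * u / (A - \<i> * u * of_real t)) = Ln A - Ln (A - \<i> * u)"
proof -
  define w where "w t = complex_of_real A - \<i> * u * t" for t :: real
  have nonpos: "w t \<notin> \<real>\<^sub>\<le>\<^sub>0" for t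
    using A by (auto simp: w_def complex_nonpos_Reals_iff)
  have nonzero: "w t \<noteq> 0" for t
    using A by (auto simp: w_def complex_eq_iff)
  have "(LBINT t=ereal 0..ereal 1. \<i> * u / w t) = (- Ln (w 1)) - (- Ln (w 0))"
  proof (rule interval_integral_FTC_finite)
    show "continuous_on {min 0 1..max 0 1} (\<lambda>t. \<i> * u / w t)"
      using nonzero unfolding w_def by (intro continuous_intros) auto
    fix t :: real
    have "((\<lambda>t::complex. - Ln (complex_of_real A - \<i> * u * t)) has_field_derivative \<i> * u / w t) (at (of_real t))"
      using nonpos[of t] unfolding w_def by (auto intro!: derivative_eq_intros simp: field_simps)
    then have "((\<lambda>t::real. - Ln (w t)) has_vector_derivative \<i> * u / w t) (at t)"
      unfolding w_def by (rule has_vector_derivative_real_field)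
    then show "((\<lambda>t. - Ln (w t)) has_vector_derivative \<i> * u / w t) (at t within {min 0 1..max 0 1})"
      by (rule has_vector_derivative_at_within)
  qed
  then show ?thesis by (simp add: w_def)
qed

text \<open>Frullani's integral: \<open>(e^(iux) - 1) e^(-Ax) / x\<close> is the integral over \<open>t \<in> [0, 1]\<close>
  of \<open>iu e^(-(A - iut) x)\<close>; integrating in \<open>x\<close> first leaves \<open>\<integral>\<^sub>0\<^sup>1 iu / (A - iut) dt\<close>.\<close>
lemma exp_frullani_integral:
  fixes A u :: real
  assumes A: "0 < A"
  shows "exp (\<integral>x. indicator {0<..} x *\<^sub>R ((iexp (u * x) - 1) * levy_dens A (\<lambda>_. 0) x) \<partial>lborel) = A / (A - \<i> * u)"
proof -
  define h where "h x t = indicator {0<..} x *\<^sub>R (indicator {0..1} t *\<^sub>R (\<i> * u * exp (- ((A - \<i> * u * of_real t) * of_real x))))"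
    for x t :: real
  have inner: "(\<integral>x. h x t \<partial>lborel) = indicator {0..1} t *\<^sub>R (\<i> * u / (A - \<i> * u * of_real t))" for t
  proof -
    have Re_pos: "0 < Re (A - \<i> * u * of_real t)" using A by simp
    have "(\<integral>x. h x t \<partial>lborel) = (\<integral>x. (indicator {0..1} t *\<^sub>R (\<i> * u)) * (indicator {0<..} x *\<^sub>R exp (- ((A - \<i> * u * of_real t) * of_real x))) \<partial>lborel)"
      unfolding h_def by (rule Bochner_Integration.integral_cong) (simp_all add: indicator_def)
    also have "\<dots> = (indicator {0..1} t *\<^sub>R (\<i> * u)) * (LBINT x:{0<..}. exp (- ((A - \<i> * u * of_real t) * of_real x)))"
      unfolding set_lebesgue_integral_def by (rule integral_mult_right_zero)
    finally show ?thesis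
      using set_integral_exp_neg_mult[OF Re_pos] by (simp add: scaleR_conv_of_real)
  qed
  have "(\<integral>x. indicator {0<..} x *\<^sub>R ((iexp (u * x) - 1) * levy_dens A (\<lambda>_. 0) x) \<partial>lborel)
      = (\<integral>x. \<integral>t. h x t \<partial>lborel \<partial>lborel)"
  proof (rule Bochner_Integration.integral_cong[OF refl])
    fix x :: real
    show "indicator {0<..} x *\<^sub>R ((iexp (u * x) - 1) * levy_dens A (\<lambda>_. 0) x) = (\<integral>t. h x t \<partial>lborel)"
      using frullani_integrand_eq[of x u A] by (cases "0 < x") (simp_all add: h_def)
  qed
  also have "\<dots> = (\<integral>t. \<integral>x. h x t \<partial>lborel \<partial>lborel)"
    using lborel_pair.Fubini_integral[OF integrable_frullani_kernel[OF A, of u]] by (simp add: h_def)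
  also have "\<dots> = (LBINT t=ereal 0..ereal 1. \<i> * u / (A - \<i> * u * of_real t))"
    using interval_integral_Icc[of 0 1 "\<lambda>t. \<i> * u / (A - \<i> * u * of_real t)"]
    by (simp add: inner set_lebesgue_integral_def)
  finally show ?thesis
    using A by (simp add: interval_integral_Ln exp_diff)
qed

lemma compound_poisson_exponential_density:
  assumes "0 < A" "r \<in> borel_measurable borel" "\<And>x. 0 \<le> r x" "integrable lborel r"
  shows "compound_poisson (exponential_density A) A r"
proof
  interpret prob_space "density lborel (exponential_density A)"
    using prob_space_exponential_density[OF assms(1)] .
  show "(\<integral>\<^sup>+x. exponential_density A x \<partial>lborel) = 1"
    using emeasure_space_1 by (simp add: emeasure_density)
  show "exponential_density A x \<le> A" for x
    using assms(1) by (simp add: exponential_density_def mult_le_cancel_left1)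
qed (use assms in \<open>auto simp: exponential_density_def\<close>)

lemma integrable_frullani_integrand:
  fixes A u :: real
  assumes A: "0 < A"
  shows "integrable lborel (\<lambda>x. indicator {0<..} x *\<^sub>R ((iexp (u * x) - 1) * levy_dens A (\<lambda>_. 0) x))"
proof (rule Bochner_Integration.integrable_bound[of _ "\<lambda>x. \<bar>u\<bar> * (indicator {0<..} x * exp (- (A * x)))"])
  show "integrable lborel (\<lambda>x. \<bar>u\<bar> * (indicator {0<..} x * exp (- (A * x))))"
    using integrable_exp_neg_mult[OF A] by simp
  have "norm ((iexp (u * x) - 1) * levy_dens A (\<lambda>_. 0) x) \<le> \<bar>u\<bar> * exp (- (A * x))" if "0 < x" for x
  proof -
    have "norm (iexp (u * x) - 1) \<le> \<bar>u * x\<bar>"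
      using iexp_approx1[of "u * x" 0] by simp
    then have "norm (iexp (u * x) - 1) * (exp (- (A * x)) / x) \<le> (\<bar>u\<bar> * x) * (exp (- (A * x)) / x)"
      using that by (intro mult_right_mono) (auto simp: abs_mult)
    then show ?thesis
      using that by (simp add: norm_mult norm_divide levy_dens_zero)
  qed
  then show "AE x in lborel. norm (indicator {0<..} x *\<^sub>R ((iexp (u * x) - 1) * levy_dens A (\<lambda>_. 0) x))
      \<le> norm (\<bar>u\<bar> * (indicator {0<..} x * exp (- (A * x))))"
    by (intro AE_I2) (simp add: indicator_def)
qed (simp add: levy_dens_def)

locale levy_density_split = compound_poisson "exponential_density A" A r for A r +
  fixes v :: "real \<Rightarrow> real"
  assumes A_pos: "0 < A"
    and r_nonpos: "\<And>x. x \<le> 0 \<Longrightarrow> r x = 0"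
    and v_measurable[measurable]: "v \<in> borel_measurable borel"
    and v_eq: "\<And>x. 0 < x \<Longrightarrow> v x = levy_dens A (\<lambda>_. 0) x + r x"
begin

lemma integrable_drift_integrand: "integrable lborel (\<lambda>x. indicator {0<..1} x * (x * v x))"
proof (rule Bochner_Integration.integrable_bound[of _ "\<lambda>x. indicator {0..1::real} x + r x"])
  show "integrable lborel (\<lambda>x. indicator {0..1::real} x + r x)"
    using r_integrable by (simp add: integrable_real_indicator)
  have "norm (indicator {0<..1} x * (x * v x)) \<le> norm (indicator {0..1::real} x + r x)" for x
  proof (cases "0 < x \<and> x \<le> 1")
    case True
    then have "x * v x = exp (- (A * x)) + x * r x"
      using v_eq[of x] by (simp add: levy_dens_zero field_simps)
    moreover have "exp (- (A * x)) \<le> 1"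
      using True A_pos by simp
    moreover have "x * r x \<le> r x" "0 \<le> x * r x"
      using True r_nonneg[of x] by (simp_all add: mult_left_le_one_le)
    ultimately have "0 \<le> x * v x" "x * v x \<le> 1 + r x"
      using exp_gt_zero[of "- (A * x)"] by linarith+
    then show ?thesis
      using True r_nonneg[of x] by (simp add: indicator_def)
  next
    case False then show ?thesis using r_nonneg[of x] by (auto simp: indicator_def)
  qed
  then show "AE x in lborel. norm (indicator {0<..1} x * (x * v x)) \<le> norm (indicator {0..1::real} x + r x)"
    by (intro AE_I2)
qed simp

lemma integral_drift_integrand:
  "(\<integral>x. \<i> * u * of_real (indicator {0<..1} x * (x * v x)) \<partial>lborel) = \<i> * u * levy_drift v"
proof -
  have "(\<integral>x. complex_of_real (indicator {0<..1} x * (x * v x)) \<partial>lborel) = levy_drift v"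
    unfolding integral_complex_of_real levy_drift_def set_lebesgue_integral_def by simp
  then show ?thesis
    using integral_mult_right_zero[of lborel "\<i> * u" "\<lambda>x. complex_of_real (indicator {0<..1} x * (x * v x))"]
    by simp
qed

lemma levy_exponent_eq:
  "levy_exponent v u = (\<integral>x. indicator {0<..} x *\<^sub>R ((iexp (u * x) - 1) * levy_dens A (\<lambda>_. 0) x) \<partial>lborel)
     + (fourier r u - mass r)"
proof -
  have "set_lebesgue_integral lborel {0<..}
      (\<lambda>x. (iexp (u * x) - 1 - \<i> * complex_of_real (u * x) * indicator {..1} x) * complex_of_real (v x))
     = (\<integral>x. indicator {0<..} x *\<^sub>R ((iexp (u * x) - 1) * levy_dens A (\<lambda>_. 0) x)
          + (iexp (u * x) - 1) * of_real (r x) - \<i> * u * of_real (indicator {0<..1} x * (x * v x)) \<partial>lborel)"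
    unfolding set_lebesgue_integral_def
  proof (rule Bochner_Integration.integral_cong[OF refl])
    fix x :: real
    show "indicator {0<..} x *\<^sub>R ((iexp (u * x) - 1 - \<i> * complex_of_real (u * x) * indicator {..1} x) * complex_of_real (v x))
      = indicator {0<..} x *\<^sub>R ((iexp (u * x) - 1) * levy_dens A (\<lambda>_. 0) x)
          + (iexp (u * x) - 1) * of_real (r x) - \<i> * u * of_real (indicator {0<..1} x * (x * v x))"
      using v_eq[of x] r_nonpos[of x] by (cases "0 < x") (auto simp: indicator_def algebra_simps)
  qed
  also have "\<dots> = (\<integral>x. indicator {0<..} x *\<^sub>R ((iexp (u * x) - 1) * levy_dens A (\<lambda>_. 0) x) \<partial>lborel)
      + (fourier r u - mass r) - \<i> * u * levy_drift v"
  proof -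
    have "integrable lborel (\<lambda>x. \<i> * u * of_real (indicator {0<..1} x * (x * v x)))"
      using integrable_drift_integrand by (intro integrable_mult_right integrable_of_real)
    then show ?thesis
      using integrable_frullani_integrand[OF A_pos] integrable_iexp_minus_one_mult_r integral_iexp_minus_one_mult_r integral_drift_integrand
      by (subst Bochner_Integration.integral_diff) (auto intro!: Bochner_Integration.integrable_add)
  qed
  finally show ?thesis
    unfolding levy_exponent_def by (simp add: algebra_simps)
qed

lemma exp_levy_exponent_eq: "exp (levy_exponent v u) = A / (A - \<i> * u) * exp (fourier r u - mass r)"
  using exp_frullani_integral[OF A_pos, of u] by (simp add: levy_exponent_eq exp_add)

lemma levy_law_eq_cpoisson:
  assumes "is_levy_law v P"
  shows "P = density lborel (cpoisson_density (exponential_density A) r)"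
proof (rule Levy_uniqueness)
  show "real_distribution P"
    using assms unfolding is_levy_law_def real_distribution_def real_distribution_axioms_def by simp
  show "char P = char (density lborel (cpoisson_density (exponential_density A) r))"
  proof
    fix u
    show "char P u = char (density lborel (cpoisson_density (exponential_density A) r)) u"
      using assms A_pos
      by (simp add: is_levy_law_def exp_levy_exponent_eq char_cpoisson_density char_exponential_density)
  qed
qed (rule real_distribution_cpoisson_density)

end

lemma abs_exp_neg_diff_le:
  fixes p q :: real
  shows "\<bar>exp (- p) - exp (- q)\<bar> \<le> (exp (- p) + exp (- q)) * \<bar>p - q\<bar>"
proof -
  have *: "\<bar>exp (- p) - exp (- q)\<bar> \<le> (exp (- p) + exp (- q)) * \<bar>p - q\<bar>" if "p \<le> q" for p q :: real
  proof -
    have "exp (- p) - exp (- q) = exp (- p) * (1 - exp (- (q - p)))"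
      by (simp add: algebra_simps exp_diff exp_minus field_simps)
    also have "\<dots> \<le> exp (- p) * (q - p)"
    proof (rule mult_left_mono)
      show "1 - exp (- (q - p)) \<le> q - p"
        using exp_ge_add_one_self[of "- (q - p)"] by linarith
    qed simp
    also have "\<dots> \<le> (exp (- p) + exp (- q)) * (q - p)"
      using that by (intro mult_right_mono) auto
    finally show ?thesis
      using that by (simp add: abs_of_nonneg abs_of_nonpos)
  qed
  show ?thesis
    using *[of p q] *[of q p] by (cases "p \<le> q") (simp_all add: abs_minus_commute add.commute)
qed

lemma sqrt_diff_sq_le:
  fixes p q :: real
  assumes "0 \<le> p" "0 \<le> q" "0 < p + q"
  shows "(sqrt p - sqrt q)\<^sup>2 \<le> (p - q)\<^sup>2 / (p + q)"
proof -
  have e: "(sqrt p - sqrt q)\<^sup>2 * (sqrt p + sqrt q)\<^sup>2 = (p - q)\<^sup>2"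
    using assms by (simp add: power_mult_distrib[symmetric] algebra_simps power2_eq_square)
  have "p + q \<le> (sqrt p + sqrt q)\<^sup>2"
    using assms by (simp add: power2_eq_square algebra_simps real_sqrt_mult[symmetric])
  then have "(sqrt p - sqrt q)\<^sup>2 * (p + q) \<le> (sqrt p - sqrt q)\<^sup>2 * (sqrt p + sqrt q)\<^sup>2"
    by (intro mult_left_mono) auto
  then show ?thesis using assms e by (simp add: le_divide_eq)
qed

lemma div_one_minus_exp_neg_le:
  fixes x :: real assumes "0 < x"
  shows "x / (1 - exp (- x)) \<le> 1 + x"
proof -
  have "(1 + x) * exp (- x) \<le> exp x * exp (- x)"
    using exp_ge_add_one_self[of x] by (intro mult_right_mono) auto
  then have "x \<le> (1 + x) * (1 - exp (- x))"
    by (simp add: algebra_simps exp_minus_inverse)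
  then show ?thesis
    using assms by (simp add: divide_le_eq)
qed

lemma sq_div_one_minus_exp_neg_le:
  fixes e d s x b :: real
  assumes x: "0 < x" and b: "0 < b" "b \<le> x" and d: "0 \<le> d" and e: "\<bar>e\<bar> \<le> d * x + s"
  shows "e\<^sup>2 / (x * (1 - exp (- x))) \<le> 2 * (1 + 1 / (b * (1 - exp (- b)))) * (1 + x) * (d\<^sup>2 + s\<^sup>2)"
proof -
  define c where "c = 1 / (b * (1 - exp (- b)))"
  have c_nonneg: "0 \<le> c"
    unfolding c_def using b by simp
  have D_pos: "0 < x * (1 - exp (- x))"
    using x by simp
  have "e\<^sup>2 \<le> (d * x + s)\<^sup>2"
    using e by (metis abs_ge_zero power2_abs power_mono)
  also have "\<dots> \<le> 2 * d\<^sup>2 * x\<^sup>2 + 2 * s\<^sup>2"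
    using zero_le_power2[of "d * x - s"] by (simp add: power2_sum power2_diff power_mult_distrib)
  finally have "e\<^sup>2 / (x * (1 - exp (- x))) \<le> (2 * d\<^sup>2 * x\<^sup>2 + 2 * s\<^sup>2) / (x * (1 - exp (- x)))"
    using D_pos by (intro divide_right_mono) auto
  also have "\<dots> = 2 * d\<^sup>2 * (x\<^sup>2 / (x * (1 - exp (- x)))) + 2 * s\<^sup>2 * (1 / (x * (1 - exp (- x))))"
    by (simp add: add_divide_distrib)
  also have "\<dots> \<le> 2 * d\<^sup>2 * (1 + x) + 2 * s\<^sup>2 * c"
  proof (intro add_mono mult_left_mono)
    show "x\<^sup>2 / (x * (1 - exp (- x))) \<le> 1 + x"
      using div_one_minus_exp_neg_le[OF x] x by (simp add: power2_eq_square)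
    have "b * (1 - exp (- b)) \<le> x * (1 - exp (- x))"
      using b by (intro mult_mono) auto
    then show "1 / (x * (1 - exp (- x))) \<le> c"
      unfolding c_def using b D_pos by (intro divide_left_mono) auto
  qed auto
  also have "\<dots> \<le> 2 * (1 + c) * (1 + x) * (d\<^sup>2 + s\<^sup>2)"
  proof -
    have "c \<le> (1 + c) * (1 + x)" "1 + x \<le> (1 + c) * (1 + x)"
      using c_nonneg x by (simp_all add: algebra_simps)
    then have "2 * s\<^sup>2 * c \<le> 2 * s\<^sup>2 * ((1 + c) * (1 + x))"
      "2 * d\<^sup>2 * (1 + x) \<le> 2 * d\<^sup>2 * ((1 + c) * (1 + x))"
      by (intro mult_left_mono; simp)+
    then show ?thesis
      by (simp add: algebra_simps)
  qed
  finally show ?thesis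
    unfolding c_def .
qed

lemma one_plus_mult_exp_neg_le:
  fixes x a :: real assumes "0 < a" "0 \<le> x"
  shows "(1 + x) * exp (- (a * x)) \<le> (1 + 2 / a) * exp (- (a / 2 * x))"
proof -
  have "x \<le> 2 / a * exp (a / 2 * x)"
    using exp_ge_add_one_self[of "a / 2 * x"] assms by (simp add: field_simps)
  moreover have "1 \<le> exp (a / 2 * x)"
    using assms by simp
  ultimately have "1 + x \<le> exp (a / 2 * x) + 2 / a * exp (a / 2 * x)"
    by linarith
  then have "1 + x \<le> (1 + 2 / a) * exp (a / 2 * x)"
    by (simp add: distrib_right)
  then have "(1 + x) * exp (- (a * x)) \<le> (1 + 2 / a) * exp (a / 2 * x) * exp (- (a * x))"
    by (intro mult_right_mono) auto
  also have "\<dots> = (1 + 2 / a) * exp (- (a / 2 * x))"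
    by (simp add: mult.assoc exp_add[symmetric])
  finally show ?thesis .
qed

lemma grid_le:
  assumes "\<forall>k\<in>{1..<N}. b k < b (Suc k)" "1 \<le> j" "j \<le> k" "k \<le> N"
  shows "(b j :: real) \<le> b k"
  using assms(3,4)
proof (induction k rule: dec_induct)
  case (step n)
  then have "n \<in> {1..<N}"
    using assms(2) by simp
  then have "b n < b (Suc n)"
    using assms(1) by blast
  then show ?case
    using step by simp
qed simp

lemma grid_theta_measurable[measurable]: "grid_theta b N \<rho> t \<in> borel_measurable borel"
  unfolding grid_theta_def by measurable

lemma grid_theta_eq_0:
  assumes "\<forall>k\<in>{1..<N}. b k < b (Suc k)" "x \<le> b 1"
  shows "grid_theta b N \<rho> t x = 0"
  unfolding grid_theta_def
proof (rule sum.neutral, intro ballI)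
  fix k assume "k \<in> {1..<N}"
  then have "b 1 \<le> b k"
    using grid_le[OF assms(1)] by simp
  then show "indicator {b k<..b (Suc k)} x * (\<rho> k + t k * x) = 0"
    using assms(2) by simp
qed

lemma abs_grid_theta_le:
  assumes grid: "\<forall>k\<in>{1..<N}. b k < b (Suc k)" and "1 \<le> N" "0 \<le> b 1" "0 \<le> c"
    and coeffs: "\<forall>k\<in>{1..<N}. \<bar>\<rho> k\<bar> \<le> c \<and> \<bar>t k\<bar> \<le> c"
  shows "\<bar>grid_theta b N \<rho> t x\<bar> \<le> real N * c * (1 + b N)"
proof -
  have bN: "0 \<le> b N"
    using grid_le[OF grid, of 1 N] assms(2,3) by simp
  have term_le: "\<bar>indicator {b k<..b (Suc k)} x * (\<rho> k + t k * x)\<bar> \<le> c * (1 + b N)" if k: "k \<in> {1..<N}" for k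
  proof (cases "x \<in> {b k<..b (Suc k)}")
    case True
    have "b 1 \<le> b k" "b (Suc k) \<le> b N"
      using k grid_le[OF grid] by auto
    then have x: "0 \<le> x" "x \<le> b N"
      using True assms(3) by auto
    have "\<bar>\<rho> k + t k * x\<bar> \<le> \<bar>\<rho> k\<bar> + \<bar>t k\<bar> * x"
      using abs_triangle_ineq[of "\<rho> k" "t k * x"] x by (simp add: abs_mult)
    also have "\<dots> \<le> c + c * b N"
      using coeffs k x by (intro add_mono mult_mono) auto
    finally show ?thesis
      using True by (simp add: algebra_simps)
  next
    case False
    then show ?thesis
      using bN assms(4) by simp
  qed
  have "\<bar>grid_theta b N \<rho> t x\<bar> \<le> (\<Sum>k\<in>{1..<N}. \<bar>indicator {b k<..b (Suc k)} x * (\<rho> k + t k * x)\<bar>)"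
    unfolding grid_theta_def by (rule sum_abs)
  also have "\<dots> \<le> real (card {1..<N}) * (c * (1 + b N))"
    by (rule sum_bounded_above) (rule term_le)
  also have "\<dots> \<le> real N * (c * (1 + b N))"
    using bN assms(4) by (intro mult_right_mono) auto
  finally show ?thesis
    by (simp add: mult.assoc)
qed

section \<open>The prior class\<close>

locale levy_prior =
  fixes al au bl T :: real
  assumes al_pos: "0 < al" and al_le_au: "al \<le> au" and bl_pos: "0 < bl" and T_nonneg: "0 \<le> T"
begin

definition admissible :: "real \<Rightarrow> (real \<Rightarrow> real) \<Rightarrow> bool" where
  "admissible a th \<longleftrightarrow> al \<le> a \<and> a \<le> au \<and> th \<in> borel_measurable borel
     \<and> (\<forall>x. \<bar>th x\<bar> \<le> T) \<and> (\<forall>x. x < bl \<longrightarrow> th x = 0)"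

text \<open>The rate is chosen so that \<open>levy_dens rate (\<lambda>_. 0) x \<le> exp (- x) * levy_dens a th x\<close>
  for every admissible \<open>a\<close> and \<open>th\<close>, see \<open>rate_gap\<close>.\<close>
definition rate :: real where
  "rate = au + 1 + (T + 1) / bl"

definition remainder :: "real \<Rightarrow> (real \<Rightarrow> real) \<Rightarrow> real \<Rightarrow> real" where
  "remainder a th x = (if 0 < x then levy_dens a th x - levy_dens rate (\<lambda>_. 0) x else 0)"

lemma rate_pos: "0 < rate"
  unfolding rate_def using al_pos al_le_au bl_pos T_nonneg
  by (smt (verit) divide_nonneg_pos)

lemma remainder_eq:
  "0 < x \<Longrightarrow> remainder a th x = exp (- (a * x + th x)) / x - exp (- (rate * x)) / x"
  unfolding remainder_def levy_dens_def by (simp add: algebra_simps)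

context
  fixes a th assumes adm: "admissible a th"
begin

lemma rate_gap:
  assumes x: "0 < x"
  shows "x \<le> rate * x - (a * x + th x)"
proof (cases "x < bl")
  case True
  have "x \<le> (au + 1 - a) * x"
    using x adm by (simp add: admissible_def mult_le_cancel_right1)
  also have "\<dots> \<le> (rate - a) * x"
    using x T_nonneg bl_pos by (intro mult_right_mono) (auto simp: rate_def)
  finally show ?thesis
    using adm True by (simp add: admissible_def algebra_simps)
next
  case False
  have "(T + 1) / bl * bl \<le> (T + 1) / bl * x"
    using False T_nonneg bl_pos by (intro mult_left_mono) auto
  then have "T + 1 \<le> (T + 1) / bl * x"
    using bl_pos by simp
  moreover have "(1 + (T + 1) / bl) * x \<le> (rate - a) * x"
    using x adm by (intro mult_right_mono) (auto simp: rate_def admissible_def)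
  moreover have "\<bar>th x\<bar> \<le> T"
    using adm by (simp add: admissible_def)
  ultimately show ?thesis
    by (simp add: algebra_simps abs_le_iff)
qed

lemma remainder_ge:
  assumes x: "0 < x"
  shows "(1 - exp (- x)) * (exp (- (a * x + th x)) / x) \<le> remainder a th x"
proof -
  have "exp (- (rate * x)) = exp (- (a * x + th x)) * exp (- (rate * x - (a * x + th x)))"
    by (simp add: exp_add[symmetric])
  also have "\<dots> \<le> exp (- (a * x + th x)) * exp (- x)"
    using rate_gap[OF x] by (intro mult_left_mono) auto
  finally have "(1 - exp (- x)) * exp (- (a * x + th x)) \<le> exp (- (a * x + th x)) - exp (- (rate * x))"
    by (simp add: algebra_simps)
  then have "(1 - exp (- x)) * exp (- (a * x + th x)) / x \<le> (exp (- (a * x + th x)) - exp (- (rate * x))) / x"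
    using x by (intro divide_right_mono) auto
  then show ?thesis
    using x by (simp add: remainder_eq diff_divide_distrib)
qed

lemma remainder_nonneg: "0 \<le> remainder a th x"
proof (cases "0 < x")
  case True
  then have "0 \<le> (1 - exp (- x)) * (exp (- (a * x + th x)) / x)"
    by simp
  then show ?thesis
    using remainder_ge[OF True] by linarith
qed (simp add: remainder_def)

lemma remainder_le_near_zero:
  assumes x: "0 < x" "x < bl"
  shows "remainder a th x \<le> rate * exp (- (al * x))"
proof -
  have a: "al \<le> a" "a \<le> au" and th: "th x = 0"
    using adm x by (auto simp: admissible_def)
  have "0 \<le> (T + 1) / bl"
    using T_nonneg bl_pos by simp
  then have "0 \<le> rate - a"
    using a unfolding rate_def by linarith
  have "1 - exp (- ((rate - a) * x)) \<le> (rate - a) * x"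
    using exp_ge_add_one_self[of "- ((rate - a) * x)"] by linarith
  moreover have "0 \<le> a * x"
    using x a al_pos by simp
  ultimately have q_le: "(1 - exp (- ((rate - a) * x))) / x \<le> rate"
    using x by (simp add: divide_le_eq algebra_simps)
  have q_nonneg: "0 \<le> (1 - exp (- ((rate - a) * x))) / x"
    using x \<open>0 \<le> rate - a\<close> by simp
  have "remainder a th x = exp (- (a * x)) * ((1 - exp (- ((rate - a) * x))) / x)"
    using x th by (simp add: remainder_eq algebra_simps exp_add[symmetric] diff_divide_distrib)
  also have "\<dots> \<le> exp (- (al * x)) * rate"
    using q_le q_nonneg a x by (intro mult_mono) (auto simp: mult_right_mono)
  finally show ?thesis
    by (simp add: mult.commute)
qed

lemma remainder_le_far:
  assumes x: "bl \<le> x"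
  shows "remainder a th x \<le> exp T / bl * exp (- (al * x))"
proof -
  have "al * x \<le> a * x" "\<bar>th x\<bar> \<le> T"
    using adm x bl_pos by (auto simp: admissible_def mult_right_mono)
  then have "exp (- (a * x + th x)) \<le> exp (T - al * x)"
    by (simp add: abs_le_iff)
  then have "exp (- (a * x + th x)) / x \<le> exp (T - al * x) / bl"
    using x bl_pos by (intro frac_le) auto
  moreover have "remainder a th x \<le> exp (- (a * x + th x)) / x"
    using x bl_pos by (simp add: remainder_eq)
  moreover have "exp (T - al * x) / bl = exp T / bl * exp (- (al * x))"
    by (simp add: exp_diff exp_minus field_simps)
  ultimately show ?thesis
    by linarith
qed

lemma remainder_le: "remainder a th x \<le> (rate + exp T / bl) * (indicator {0<..} x * exp (- (al * x)))"
proof (cases "0 < x")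
  case True
  then show ?thesis
    using remainder_le_near_zero[OF True] remainder_le_far rate_pos bl_pos
    by (cases "x < bl") (fastforce simp: distrib_right intro: add_increasing2 add_increasing)+
qed (use rate_pos bl_pos in \<open>simp add: remainder_def\<close>)

lemma levy_density_split_remainder: "levy_density_split rate (remainder a th) (levy_dens a th)"
proof -
  have [measurable]: "th \<in> borel_measurable borel"
    using adm by (simp add: admissible_def)
  have [measurable]: "remainder a th \<in> borel_measurable borel"
    unfolding remainder_def by measurable
  have "integrable lborel (remainder a th)"
  proof (rule Bochner_Integration.integrable_bound)
    show "integrable lborel (\<lambda>x. (rate + exp T / bl) * (indicator {0<..} x * exp (- (al * x))))"
      using integrable_exp_neg_mult[OF al_pos] by simp
    show "AE x in lborel. norm (remainder a th x) \<le> norm ((rate + exp T / bl) * (indicator {0<..} x * exp (- (al * x))))"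
      using remainder_le remainder_nonneg order_trans[OF remainder_nonneg remainder_le]
      by (intro AE_I2) simp
  qed simp
  then interpret compound_poisson "exponential_density rate" rate "remainder a th"
    using rate_pos remainder_nonneg
    by (intro compound_poisson_exponential_density) simp_all
  show ?thesis
    using rate_pos by unfold_locales (simp_all add: remainder_def levy_dens_def)
qed

lemma levy_law_eq:
  "is_levy_law (levy_dens a th) P \<Longrightarrow> P = density lborel (cpoisson_density (exponential_density rate) (remainder a th))"
  using levy_density_split.levy_law_eq_cpoisson[OF levy_density_split_remainder] .

end

definition sq_diff_const :: real where
  "sq_diff_const = 4 * exp T * (1 + 1 / (bl * (1 - exp (- bl)))) * (1 + 2 / al)"

lemma sq_diff_const_nonneg: "0 \<le> sq_diff_const"
  unfolding sq_diff_const_def using al_pos bl_pos by simp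

lemma exponent_diff_sq_div_le:
  assumes adm0: "admissible a0 th0" and adm: "admissible a th"
    and s: "\<bar>th x - th0 x\<bar> \<le> s" and x: "0 < x"
  shows "((a0 * x + th0 x) - (a * x + th x))\<^sup>2 / (x * (1 - exp (- x)))
      \<le> 2 * (1 + 1 / (bl * (1 - exp (- bl)))) * (1 + x) * (\<bar>a - a0\<bar>\<^sup>2 + s\<^sup>2)"
proof (cases "x < bl")
  case True
  then have "((a0 * x + th0 x) - (a * x + th x))\<^sup>2 = \<bar>a - a0\<bar>\<^sup>2 * x\<^sup>2"
    using adm0 adm by (simp add: admissible_def power2_eq_square algebra_simps)
  moreover have x_sq_div: "x\<^sup>2 / (x * (1 - exp (- x))) \<le> 1 + x"
    using div_one_minus_exp_neg_le[OF x] x by (simp add: power2_eq_square)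
  ultimately have "((a0 * x + th0 x) - (a * x + th x))\<^sup>2 / (x * (1 - exp (- x))) \<le> \<bar>a - a0\<bar>\<^sup>2 * (1 + x)"
    using mult_left_mono[OF x_sq_div zero_le_power2[of "\<bar>a - a0\<bar>"]] by simp
  also have "\<dots> \<le> 2 * (1 + 1 / (bl * (1 - exp (- bl)))) * (1 + x) * (\<bar>a - a0\<bar>\<^sup>2 + s\<^sup>2)"
    using bl_pos x by (simp add: algebra_simps mult_nonneg_nonneg)
  finally show ?thesis .
next
  case False
  have "\<bar>(a0 * x + th0 x) - (a * x + th x)\<bar> = \<bar>(a0 - a) * x + (th0 x - th x)\<bar>"
    by (simp add: algebra_simps)
  also have "\<dots> \<le> \<bar>(a0 - a) * x\<bar> + \<bar>th0 x - th x\<bar>"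
    by (rule abs_triangle_ineq)
  also have "\<dots> \<le> \<bar>a - a0\<bar> * x + s"
    using x s by (simp add: abs_mult abs_minus_commute)
  finally show ?thesis
    using x bl_pos False by (intro sq_div_one_minus_exp_neg_le) auto
qed

text \<open>By \<open>remainder_ge\<close>, \<open>r\<^sub>0 + r\<close> is comparable to \<open>(V\<^sub>0 + V) (1 - exp (- x)) / x\<close>, where
  \<open>V = exp (- (a x + \<theta> x))\<close>, while \<open>r\<^sub>0 - r = (V\<^sub>0 - V) / x\<close>.\<close>
lemma sqrt_remainder_diff_sq_le_exponent:
  assumes adm0: "admissible a0 th0" and adm: "admissible a th" and x: "0 < x"
  shows "(sqrt (remainder a0 th0 x) - sqrt (remainder a th x))\<^sup>2
      \<le> (exp (- (a0 * x + th0 x)) + exp (- (a * x + th x)))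
         * (((a0 * x + th0 x) - (a * x + th x))\<^sup>2 / (x * (1 - exp (- x))))"
proof -
  define V0 where "V0 = exp (- (a0 * x + th0 x))"
  define V where "V = exp (- (a * x + th x))"
  define D where "D = x * (1 - exp (- x))"
  have V_pos: "0 < V0 + V" and D_pos: "0 < D"
    unfolding V0_def V_def D_def using x by (simp_all add: add_pos_pos)
  have "(V0 + V) * D / x\<^sup>2 = (1 - exp (- x)) * (V0 / x) + (1 - exp (- x)) * (V / x)"
    unfolding D_def using x by (simp add: power2_eq_square field_simps)
  then have sum_ge: "(V0 + V) * D / x\<^sup>2 \<le> remainder a0 th0 x + remainder a th x"
    using remainder_ge[OF adm0 x] remainder_ge[OF adm x] unfolding V0_def V_def by linarith
  have sum_pos: "0 < (V0 + V) * D / x\<^sup>2"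
    using V_pos D_pos x by simp
  have "(sqrt (remainder a0 th0 x) - sqrt (remainder a th x))\<^sup>2
      \<le> (remainder a0 th0 x - remainder a th x)\<^sup>2 / (remainder a0 th0 x + remainder a th x)"
    using sum_ge sum_pos remainder_nonneg[OF adm0] remainder_nonneg[OF adm]
    by (intro sqrt_diff_sq_le) auto
  also have "\<dots> \<le> ((V0 - V) / x)\<^sup>2 / ((V0 + V) * D / x\<^sup>2)"
  proof -
    have "remainder a0 th0 x - remainder a th x = (V0 - V) / x"
      unfolding V0_def V_def using x by (simp add: remainder_eq diff_divide_distrib)
    moreover have "0 < (remainder a0 th0 x + remainder a th x) * ((V0 + V) * D / x\<^sup>2)"
      using sum_ge sum_pos by (intro mult_pos_pos) auto
    ultimately show ?thesis
      using divide_left_mono[OF sum_ge zero_le_power2] by simp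
  qed
  also have "\<dots> = (V0 - V)\<^sup>2 / ((V0 + V) * D)"
    using x by (simp add: power_divide)
  also have "\<dots> \<le> (V0 + V)\<^sup>2 * ((a0 * x + th0 x) - (a * x + th x))\<^sup>2 / ((V0 + V) * D)"
  proof (rule divide_right_mono)
    have "\<bar>V0 - V\<bar> \<le> \<bar>(V0 + V) * ((a0 * x + th0 x) - (a * x + th x))\<bar>"
      using abs_exp_neg_diff_le[of "a0 * x + th0 x" "a * x + th x"] V_pos
      unfolding V0_def V_def by (simp add: abs_mult)
    then show "(V0 - V)\<^sup>2 \<le> (V0 + V)\<^sup>2 * ((a0 * x + th0 x) - (a * x + th x))\<^sup>2"
      by (simp add: abs_le_square_iff power_mult_distrib)
  qed (use V_pos D_pos in simp)
  also have "\<dots> = (V0 + V) * (((a0 * x + th0 x) - (a * x + th x))\<^sup>2 / D)"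
    using V_pos by (simp add: power2_eq_square)
  finally show ?thesis
    unfolding V0_def V_def D_def .
qed

lemma sqrt_remainder_diff_sq_le:
  assumes adm0: "admissible a0 th0" and adm: "admissible a th"
    and s: "\<And>x. \<bar>th x - th0 x\<bar> \<le> s"
  shows "(sqrt (remainder a0 th0 x) - sqrt (remainder a th x))\<^sup>2
      \<le> sq_diff_const * (\<bar>a - a0\<bar>\<^sup>2 + s\<^sup>2) * (indicator {0<..} x * exp (- (al / 2 * x)))"
proof (cases "0 < x")
  case x: True
  have exp_le: "exp (- (b * x + th' x)) \<le> exp T * exp (- (al * x))" if "admissible b th'" for b th'
  proof -
    have "al * x \<le> b * x" "\<bar>th' x\<bar> \<le> T"
      using that x by (auto simp: admissible_def mult_right_mono)
    then show ?thesis
      by (simp add: exp_add[symmetric] abs_le_iff)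
  qed
  have "exp (- (a0 * x + th0 x)) + exp (- (a * x + th x)) \<le> 2 * exp T * exp (- (al * x))"
    using exp_le[OF adm0] exp_le[OF adm] by linarith
  then have "(exp (- (a0 * x + th0 x)) + exp (- (a * x + th x)))
        * (((a0 * x + th0 x) - (a * x + th x))\<^sup>2 / (x * (1 - exp (- x))))
      \<le> (2 * exp T * exp (- (al * x))) * (2 * (1 + 1 / (bl * (1 - exp (- bl)))) * (1 + x) * (\<bar>a - a0\<bar>\<^sup>2 + s\<^sup>2))"
    using exponent_diff_sq_div_le[OF adm0 adm s x] x by (intro mult_mono) auto
  then have "(sqrt (remainder a0 th0 x) - sqrt (remainder a th x))\<^sup>2
      \<le> (2 * exp T * exp (- (al * x))) * (2 * (1 + 1 / (bl * (1 - exp (- bl)))) * (1 + x) * (\<bar>a - a0\<bar>\<^sup>2 + s\<^sup>2))"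
    using sqrt_remainder_diff_sq_le_exponent[OF adm0 adm x] by linarith
  also have "\<dots> = (4 * exp T * (1 + 1 / (bl * (1 - exp (- bl)))) * (\<bar>a - a0\<bar>\<^sup>2 + s\<^sup>2)) * ((1 + x) * exp (- (al * x)))"
    by (simp add: algebra_simps)
  also have "\<dots> \<le> (4 * exp T * (1 + 1 / (bl * (1 - exp (- bl)))) * (\<bar>a - a0\<bar>\<^sup>2 + s\<^sup>2)) * ((1 + 2 / al) * exp (- (al / 2 * x)))"
    using one_plus_mult_exp_neg_le[OF al_pos, of x] x bl_pos by (intro mult_left_mono) auto
  finally show ?thesis
    using x by (simp add: sq_diff_const_def ac_simps)
qed (simp add: remainder_def)

lemma compound_poisson_remainder:
  "admissible a th \<Longrightarrow> compound_poisson (exponential_density rate) rate (remainder a th)"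
  using levy_density_split_remainder levy_density_split.axioms(1) by blast

lemma hellinger_levy_laws_le:
  assumes adm0: "admissible a0 th0" and adm: "admissible a th"
    and s: "\<And>x. \<bar>th x - th0 x\<bar> \<le> s"
    and P0: "is_levy_law (levy_dens a0 th0) P0" and P: "is_levy_law (levy_dens a th) P"
  shows "hellinger P0 P \<le> sqrt (sq_diff_const / al) * (\<bar>a - a0\<bar> + s)"
proof -
  interpret compound_poisson_pair "exponential_density rate" rate "remainder a0 th0" "remainder a th"
    using compound_poisson_remainder[OF adm0] compound_poisson_remainder[OF adm]
    by (rule compound_poisson_pair.intro)
  have s_nonneg: "0 \<le> s"
    using s[of 0] by linarith
  have "(\<integral>x. (sqrt (remainder a0 th0 x) - sqrt (remainder a th x))\<^sup>2 \<partial>lborel)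
      \<le> (\<integral>x. sq_diff_const * (\<bar>a - a0\<bar>\<^sup>2 + s\<^sup>2) * (indicator {0<..} x * exp (- (al / 2 * x))) \<partial>lborel)"
    using integral_sqrt_diff_sq(1) integrable_exp_neg_mult[of "al / 2"] al_pos
    by (intro integral_mono sqrt_remainder_diff_sq_le[OF adm0 adm s]) auto
  also have "\<dots> = 2 * (sq_diff_const / al) * (\<bar>a - a0\<bar>\<^sup>2 + s\<^sup>2)"
    using al_pos integral_exp_neg_mult[of "al / 2"] by simp
  finally have "(hellinger P0 P)\<^sup>2 \<le> (sq_diff_const / al) * (\<bar>a - a0\<bar>\<^sup>2 + s\<^sup>2)"
    using hellinger_cpoisson_sq_le levy_law_eq[OF adm0 P0] levy_law_eq[OF adm P] by simp
  also have "\<dots> \<le> (sq_diff_const / al) * (\<bar>a - a0\<bar> + s)\<^sup>2"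
  proof (rule mult_left_mono)
    show "\<bar>a - a0\<bar>\<^sup>2 + s\<^sup>2 \<le> (\<bar>a - a0\<bar> + s)\<^sup>2"
      using s_nonneg by (simp add: power2_sum)
  qed (use sq_diff_const_nonneg al_pos in simp)
  also have "\<dots> = (sqrt (sq_diff_const / al) * (\<bar>a - a0\<bar> + s))\<^sup>2"
    by (simp only: power_mult_distrib real_sqrt_pow2[OF divide_nonneg_pos[OF sq_diff_const_nonneg al_pos]])
  finally show ?thesis
    by (rule power2_le_imp_le) (use sq_diff_const_nonneg al_pos s_nonneg in simp)
qed


lemma abs_diff_le_SUP:
  assumes "admissible a th" "admissible a0 th0"
  shows "\<bar>th x - th0 x\<bar> \<le> (SUP y. \<bar>th y - th0 y\<bar>)"
proof (rule cSUP_upper)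
  have "\<bar>th y - th0 y\<bar> \<le> 2 * T" for y
  proof -
    have "\<bar>th y\<bar> \<le> T" "\<bar>th0 y\<bar> \<le> T"
      using assms by (simp_all add: admissible_def)
    then show ?thesis
      using abs_triangle_ineq4[of "th y" "th0 y"] by linarith
  qed
  then show "bdd_above (range (\<lambda>y. \<bar>th y - th0 y\<bar>))"
    by (intro bdd_aboveI2)
qed simp

lemma admissible_grid_theta:
  assumes grid: "\<forall>k\<in>{1..<N}. b k < b (Suc k)" "1 \<le> N" "b 1 = bl"
    and a: "a \<in> {al..au}" and coeffs: "\<forall>k\<in>{1..<N}. \<bar>\<rho> k\<bar> \<le> c \<and> \<bar>t k\<bar> \<le> c"
    and c: "0 \<le> c" "real N * c * (1 + b N) \<le> T"
  shows "admissible a (grid_theta b N \<rho> t)"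
proof -
  have "\<bar>grid_theta b N \<rho> t x\<bar> \<le> real N * c * (1 + b N)" for x
    using abs_grid_theta_le[OF grid(1,2) _ c(1) coeffs] grid(3) bl_pos by simp
  then have "\<bar>grid_theta b N \<rho> t x\<bar> \<le> T" for x
    using c(2) order_trans by blast
  moreover have "grid_theta b N \<rho> t x = 0" if "x < bl" for x
    using grid_theta_eq_0[OF grid(1)] that grid(3) by simp
  ultimately show ?thesis
    using a by (simp add: admissible_def)
qed

end

theorem lemmaA8:
  fixes bl bu al au thb a0 :: real and th0 :: "real \<Rightarrow> real"
    and N :: nat and b :: "nat \<Rightarrow> real"
  assumes "0 < bl" "bl < bu" "0 < al" "al < au" "0 < thb"
    and "a0 \<in> {al..au}"
    and "th0 \<in> borel_measurable borel"
    and "\<forall>x. x \<notin> {bl..bu} \<longrightarrow> th0 x = 0"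
    and "\<exists>c < thb. \<forall>x. \<bar>th0 x\<bar> \<le> c"
    and "2 \<le> N" "b 1 = bl" "b N = bu" "\<forall>k\<in>{1..<N}. b k < b (Suc k)"
  shows "\<exists>C. \<forall>a \<rho> t P0 P.
           a \<in> {al..au} \<and> (\<forall>k\<in>{1..<N}. \<bar>\<rho> k\<bar> \<le> thb \<and> \<bar>t k\<bar> \<le> thb) \<and>
           is_levy_law (levy_dens a0 th0) P0 \<and>
           is_levy_law (levy_dens a (grid_theta b N \<rho> t)) P \<longrightarrow>
           hellinger P0 P \<le> C * (\<bar>a - a0\<bar> + (SUP x. \<bar>grid_theta b N \<rho> t x - th0 x\<bar>))"
proof -
  define T where "T = real N * thb * (1 + bu) + thb"
  have T_ge: "real N * thb * (1 + bu) \<le> T" "thb \<le> T"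
    unfolding T_def using assms(1,2,5) by simp_all
  interpret levy_prior al au bl T
    using assms(1,3,4) T_ge(2) assms(5) by unfold_locales auto
  obtain c where c: "c < thb" "\<And>x. \<bar>th0 x\<bar> \<le> c"
    using assms(9) by blast
  have "\<bar>th0 x\<bar> \<le> T" for x
    using c(1) c(2)[of x] T_ge(2) by linarith
  then have adm0: "admissible a0 th0"
    using assms(6-8) by (auto simp: admissible_def)
  show ?thesis
  proof (intro exI[of _ "sqrt (sq_diff_const / al)"] allI impI, elim conjE)
    fix a \<rho> t P0 P
    assume "a \<in> {al..au}" "\<forall>k\<in>{1..<N}. \<bar>\<rho> k\<bar> \<le> thb \<and> \<bar>t k\<bar> \<le> thb"
      and laws: "is_levy_law (levy_dens a0 th0) P0" "is_levy_law (levy_dens a (grid_theta b N \<rho> t)) P"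
    then have adm: "admissible a (grid_theta b N \<rho> t)"
      using T_ge(1) assms(1,5,10-13) by (intro admissible_grid_theta) auto
    show "hellinger P0 P \<le> sqrt (sq_diff_const / al) * (\<bar>a - a0\<bar> + (SUP x. \<bar>grid_theta b N \<rho> t x - th0 x\<bar>))"
      by (rule hellinger_levy_laws_le[OF adm0 adm abs_diff_le_SUP[OF adm adm0] laws])
  qed
qed

end
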